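(* For every integer $n\ge 1$, the toric ideal $I_{S_n}$ has a state polytope that is unimodularly equivalent to the permutohedron $\Pi_n$. In particular, $I_{S_n}$ has exactly $n!$ distinct initial ideals, namely the initial ideals with respect to the weight vectors $(\pi,\pi^c)\in\mathbb{R}^{2n}$ for $\pi\in\mathfrak{S}_n$.
   Context: With $e_i\in\mathbb{R}^{n+1}$ the standard basis vectors, let $s_i=e_1+e_{i+1}+e_{n+1}$ for $1\le i<n$, $s_n=e_1+e_{n+1}$, $s_i=e_{i+1-n}+e_{n+1}$ for $n<i<2n$, $s_{2n}=e_{n+1}$. The toric ideal $I_{S_n}$ is the kernel of $\mathbb{C}[t_1,\dots,t_{2n}]\to\mathbb{C}[x_1,\dots,x_{n+1}]$, $t_i\mapsto x^{s_i}$; it is homogeneous. For a weight $w\in\mathbb{R}^{2n}$, the initial ideal is generated by the initial forms (terms of maximal $w$-weight, ties broken by a fixed monomial order) of elements of the ideal. The Gröbner fan of a homogeneous ideal is the fan whose cones are the closures of the sets of weight vectors giving the same initial ideal; a state polytope of the ideal is a polytope whose normal fan (with normal cones $N_P(F)=\{a:\ F \text{ is the set of maximizers of } a\cdot x \text{ on } P\}$) equals the Gröbner fan. $\Pi_n=\mathrm{conv}\{(\pi_1,\dots,\pi_n):\pi\in\mathfrak{S}_n\}$, and for $\pi\in\mathfrak{S}_n$, $\pi^c=(n+1-\pi_1,\dots,n+1-\pi_n)$. Polytopes $P,P'\subseteq\mathbb{R}^m$ are unimodularly equivalent if $P'=MP+v$ with $M\in\mathrm{GL}_m(\mathbb{Z})$,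 $v\in\mathbb{Z}^m$; for $P\subseteq\mathbb{R}^N$, $P'\subseteq\mathbb{R}^m$, $N>m$, this means $P$ is unimodularly equivalent to $P'\times\{0\}$. *)

theory Defs
  imports "HOL-Analysis.Analysis" "HOL-Analysis.Finite_Function_Topology"
    "HOL-Library.Poly_Mapping" "HOL-Combinatorics.Permutations"
begin

text \<open>All indices are 1-based as in the paper.
 Real vectors of R^m are elements x of type nat =>0 real whose support lies in {1..m}
 (this type is a real normed vector space; on vectors supported in {1..m} its topology is
 the Euclidean one). Polynomials in the variables t_1,...,t_2n are elements of
 (nat =>0 nat) =>0 complex whose monomials (exponent vectors) only involve indices in {1..2n};
 Poly_Mapping provides the commutative ring structure.\<close>

definition Rvec :: "nat \<Rightarrow> (nat \<Rightarrow>\<^sub>0 real) set" where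
  "Rvec m = {x. Poly_Mapping.keys x \<subseteq> {1..m}}"

type_synonym mon = "nat \<Rightarrow>\<^sub>0 nat"
type_synonym cpoly = "mon \<Rightarrow>\<^sub>0 complex"

definition poly_ring :: "nat \<Rightarrow> cpoly set" where
  "poly_ring m = {p. \<forall>a\<in>Poly_Mapping.keys p. Poly_Mapping.keys a \<subseteq> {1..m}}"

definition evec :: "nat \<Rightarrow> nat \<Rightarrow> nat" where
  "evec k = (\<lambda>j. if j = k then 1 else 0)"

definition svec :: "nat \<Rightarrow> nat \<Rightarrow> nat \<Rightarrow> nat" where
  "svec n i =
     (if i < n then (\<lambda>j. evec 1 j + evec (i+1) j + evec (n+1) j)
      else if i = n then (\<lambda>j. evec 1 j + evec (n+1) j)
      else if i < 2*n then (\<lambda>j. evec (i+1-n) j + evec (n+1) j)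
      else evec (n+1))"

text \<open>Exponent vector of the image of the monomial t^a under t_i |-> x^(s_i).\<close>
definition toric_exp :: "nat \<Rightarrow> mon \<Rightarrow> nat \<Rightarrow> nat" where
  "toric_exp n a = (\<lambda>j. \<Sum>i\<in>Poly_Mapping.keys a. Poly_Mapping.lookup a i * svec n i j)"

text \<open>Coefficient of x^b in the image of p under the C-algebra map t_i |-> x^(s_i).\<close>
definition toric_image_coeff :: "nat \<Rightarrow> cpoly \<Rightarrow> (nat \<Rightarrow> nat) \<Rightarrow> complex" where
  "toric_image_coeff n p b =
     (\<Sum>a\<in>{a\<in>Poly_Mapping.keys p. toric_exp n a = b}. Poly_Mapping.lookup p a)"

definition toric_ideal :: "nat \<Rightarrow> cpoly set" where
  "toric_ideal n = {p \<in> poly_ring (2*n). \<forall>b. toric_image_coeff n p b = 0}"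

definition is_ideal :: "nat \<Rightarrow> cpoly set \<Rightarrow> bool" where
  "is_ideal m J \<longleftrightarrow> J \<subseteq> poly_ring m \<and> 0 \<in> J \<and> (\<forall>x\<in>J. \<forall>y\<in>J. x + y \<in> J)
      \<and> (\<forall>r\<in>poly_ring m. \<forall>x\<in>J. r * x \<in> J)"

definition ideal_gen :: "nat \<Rightarrow> cpoly set \<Rightarrow> cpoly set" where
  "ideal_gen m G = \<Inter>{J. is_ideal m J \<and> G \<subseteq> J}"

text \<open>Monomial orders (on exponent vectors; ord a b means t^a \<preceq> t^b).\<close>
definition monomial_order :: "(mon \<Rightarrow> mon \<Rightarrow> bool) \<Rightarrow> bool" where
  "monomial_order ord \<longleftrightarrow>
     (\<forall>a. ord a a) \<and> (\<forall>a b. ord a b \<and> ord b a \<longrightarrow> a = b)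
   \<and> (\<forall>a b c. ord a b \<and> ord b c \<longrightarrow> ord a c) \<and> (\<forall>a b. ord a b \<or> ord b a)
   \<and> (\<forall>a b c. ord a b \<longrightarrow> ord (a + c) (b + c)) \<and> (\<forall>a. ord 0 a)"

definition mweight :: "(nat \<Rightarrow>\<^sub>0 real) \<Rightarrow> mon \<Rightarrow> real" where
  "mweight w a = (\<Sum>i\<in>Poly_Mapping.keys a. Poly_Mapping.lookup w i * real (Poly_Mapping.lookup a i))"

definition init_mon :: "(mon \<Rightarrow> mon \<Rightarrow> bool) \<Rightarrow> (nat \<Rightarrow>\<^sub>0 real) \<Rightarrow> cpoly \<Rightarrow> mon" where
  "init_mon ord w f = (THE a. a \<in> Poly_Mapping.keys f \<and>
      (\<forall>b\<in>Poly_Mapping.keys f. b \<noteq> a \<longrightarrow>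
          mweight w b < mweight w a \<or> (mweight w b = mweight w a \<and> ord b a)))"

definition init_form :: "(mon \<Rightarrow> mon \<Rightarrow> bool) \<Rightarrow> (nat \<Rightarrow>\<^sub>0 real) \<Rightarrow> cpoly \<Rightarrow> cpoly" where
  "init_form ord w f = Poly_Mapping.single (init_mon ord w f) (Poly_Mapping.lookup f (init_mon ord w f))"

definition init_ideal :: "(mon \<Rightarrow> mon \<Rightarrow> bool) \<Rightarrow> nat \<Rightarrow> (nat \<Rightarrow>\<^sub>0 real) \<Rightarrow> cpoly set \<Rightarrow> cpoly set" where
  "init_ideal ord m w I = ideal_gen m {init_form ord w f | f. f \<in> I \<and> f \<noteq> 0}"

definition groebner_cones :: "(mon \<Rightarrow> mon \<Rightarrow> bool) \<Rightarrow> nat \<Rightarrow> cpoly set \<Rightarrow> (nat \<Rightarrow>\<^sub>0 real) set set" where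
  "groebner_cones ord m I =
     {closure {w' \<in> Rvec m. init_ideal ord m w' I = init_ideal ord m w I} | w. w \<in> Rvec m}"

definition dotp :: "nat \<Rightarrow> (nat \<Rightarrow>\<^sub>0 real) \<Rightarrow> (nat \<Rightarrow>\<^sub>0 real) \<Rightarrow> real" where
  "dotp m a x = (\<Sum>i\<in>{1..m}. Poly_Mapping.lookup a i * Poly_Mapping.lookup x i)"

definition maximizers :: "nat \<Rightarrow> (nat \<Rightarrow>\<^sub>0 real) set \<Rightarrow> (nat \<Rightarrow>\<^sub>0 real) \<Rightarrow> (nat \<Rightarrow>\<^sub>0 real) set" where
  "maximizers m P a = {x \<in> P. \<forall>y\<in>P. dotp m a y \<le> dotp m a x}"

definition normal_cone :: "nat \<Rightarrow> (nat \<Rightarrow>\<^sub>0 real) set \<Rightarrow> (nat \<Rightarrow>\<^sub>0 real) set \<Rightarrow> (nat \<Rightarrow>\<^sub>0 real) set" where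
  "normal_cone m P F = {a \<in> Rvec m. maximizers m P a = F}"

definition normal_fan_max_cones :: "nat \<Rightarrow> (nat \<Rightarrow>\<^sub>0 real) set \<Rightarrow> (nat \<Rightarrow>\<^sub>0 real) set set" where
  "normal_fan_max_cones m P =
     {closure (normal_cone m P {v}) | v. normal_cone m P {v} \<noteq> {}}"

definition polytope_in :: "nat \<Rightarrow> (nat \<Rightarrow>\<^sub>0 real) set \<Rightarrow> bool" where
  "polytope_in m P \<longleftrightarrow> (\<exists>S. finite S \<and> S \<subseteq> Rvec m \<and> P = convex hull S)"

definition state_polytope :: "(mon \<Rightarrow> mon \<Rightarrow> bool) \<Rightarrow> nat \<Rightarrow> cpoly set \<Rightarrow> (nat \<Rightarrow>\<^sub>0 real) set \<Rightarrow> bool" where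
  "state_polytope ord m I P \<longleftrightarrow>
     polytope_in m P \<and> normal_fan_max_cones m P = groebner_cones ord m I"

definition unimod_equiv :: "nat \<Rightarrow> (nat \<Rightarrow>\<^sub>0 real) set \<Rightarrow> (nat \<Rightarrow>\<^sub>0 real) set \<Rightarrow> bool" where
  "unimod_equiv m P Q \<longleftrightarrow>
     (\<exists>(M::nat \<Rightarrow> nat \<Rightarrow> int) (N::nat \<Rightarrow> nat \<Rightarrow> int) (v::nat \<Rightarrow> int).
        (\<forall>i\<in>{1..m}. \<forall>j\<in>{1..m}.
            (\<Sum>k\<in>{1..m}. M i k * N k j) = (if i = j then 1 else 0)
          \<and> (\<Sum>k\<in>{1..m}. N i k * M k j) = (if i = j then 1 else 0))
      \<and> Q = (\<lambda>x. \<Sum>i\<in>{1..m}. Poly_Mapping.single i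
                 (of_int (v i) + (\<Sum>j\<in>{1..m}. of_int (M i j) * Poly_Mapping.lookup x j))) ` P)"

text \<open>Permutohedron Pi_n in R^n (as a subset of R^m for any m >= n this is Pi_n x {0}).\<close>
definition perm_vec :: "nat \<Rightarrow> (nat \<Rightarrow> nat) \<Rightarrow> (nat \<Rightarrow>\<^sub>0 real)" where
  "perm_vec n \<pi> = (\<Sum>i\<in>{1..n}. Poly_Mapping.single i (real (\<pi> i)))"

definition permutohedron :: "nat \<Rightarrow> (nat \<Rightarrow>\<^sub>0 real) set" where
  "permutohedron n = convex hull {perm_vec n \<pi> | \<pi>. \<pi> permutes {1..n}}"

definition perm_weight :: "nat \<Rightarrow> (nat \<Rightarrow> nat) \<Rightarrow> (nat \<Rightarrow>\<^sub>0 real)" where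
  "perm_weight n \<pi> = (\<Sum>i\<in>{1..n}. Poly_Mapping.single i (real (\<pi> i))
                        + Poly_Mapping.single (n + i) (real (n + 1 - \<pi> i)))"

end

theory Submission
  imports Defs
begin

text \<open>A weight vector w, with ties broken by the monomial order, compares the two terms
  of every binomial t_i t_{n+j} - t_j t_{n+i} of the toric ideal, and these comparisons form
  a strict total order on {1..n}, i.e. a permutation \<pi>. Call a monomial standard for \<pi> if it
  has no factor t_i t_{n+j} with \<pi> j < \<pi> i. Swapping such a factor to t_j t_{n+i} stays in
  the fibre of the toric map and lowers both the w-order and the potential \<Sum> \<pi> i * a_i,
  while a fibre contains at most one standard monomial. Hence the standard monomial of a
  fibre is its w-least element, the initial ideal is spanned by the nonstandard monomials,
  and it determines \<pi>. The weights inducing \<pi> thus form one Groebner class, whose closure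
  is the cone of all w with w_j - w_{n+j} \<le> w_i - w_{n+i} whenever \<pi> j < \<pi> i. By the
  rearrangement inequality this is the normal cone of the vertex (\<pi>, -\<pi>) of
  conv {(\<sigma>, -\<sigma>)}, and the shear (x, y) \<mapsto> (x, x + y) maps this polytope onto \<Pi>_n \<times> {0}.\<close>

declare One_nat_def [simp del]

abbreviation "lookup \<equiv> Poly_Mapping.lookup"
abbreviation "keys \<equiv> Poly_Mapping.keys"
abbreviation "single \<equiv> Poly_Mapping.single"

lemma lookup_scaleR [simp]: "lookup (c *\<^sub>R (x :: 'a \<Rightarrow>\<^sub>0 real)) i = c * lookup x i"
proof -
  have "finite {i. c *\<^sub>R lookup x i \<noteq> 0}"
    by (rule finite_subset[of _ "keys x"]) (auto simp: in_keys_iff)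
  then show ?thesis
    by (simp add: scaleR_poly_mapping_def lookup_Abs_poly_mapping)
qed

lemma Rvec_iff: "x \<in> Rvec m \<longleftrightarrow> (\<forall>k. k \<notin> {1..m} \<longrightarrow> lookup x k = 0)"
  unfolding Rvec_def by (auto simp: in_keys_iff)

lemma lookup_sum_single:
  "finite A \<Longrightarrow> lookup (\<Sum>i\<in>A. single i (f i)) k = (if k \<in> A then f k else 0)"
  by (simp add: lookup_sum lookup_single when_def)

lemma lookup_sum_single_pair:
  fixes n k :: nat
  shows "lookup (\<Sum>i\<in>{1..n}. single i (f i) + single (n + i) (g i)) k
     = (if k \<in> {1..n} then f k else if k \<in> {n+1..2*n} then g (k - n) else 0)"
proof -
  have shifted: "(\<Sum>i\<in>{1..n}. (g i when n + i = k)) = (if k \<in> {n+1..2*n} then g (k - n) else 0)"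
  proof (cases "k \<in> {n+1..2*n}")
    case True
    then have "(\<Sum>i\<in>{1..n}. (g i when n + i = k)) = (\<Sum>i\<in>{1..n}. if i = k - n then g i else 0)"
      by (intro sum.cong) (auto simp: when_def)
    also have "\<dots> = g (k - n)" using True by (subst sum.delta) auto
    finally show ?thesis using True by simp
  next
    case False
    then have "(\<Sum>i\<in>{1..n}. (g i when n + i = k)) = 0"
      by (intro sum.neutral) (auto simp: when_def)
    then show ?thesis unfolding if_not_P[OF False] .
  qed
  have "lookup (\<Sum>i\<in>{1..n}. single i (f i) + single (n + i) (g i)) k
     = (\<Sum>i\<in>{1..n}. (f i when i = k)) + (\<Sum>i\<in>{1..n}. (g i when n + i = k))"
    by (simp add: lookup_sum lookup_add lookup_single sum.distrib)
  also have "(\<Sum>i\<in>{1..n}. (f i when i = k)) = (if k \<in> {1..n} then f k else 0)"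
    by (simp add: when_def)
  finally have "lookup (\<Sum>i\<in>{1..n}. single i (f i) + single (n + i) (g i)) k
     = (if k \<in> {1..n} then f k else 0) + (if k \<in> {n+1..2*n} then g (k - n) else 0)"
    unfolding shifted .
  moreover have "k \<in> {1..n} \<Longrightarrow> k \<notin> {n+1..2*n}" by auto
  ultimately show ?thesis by (simp del: atLeastAtMost_iff)
qed

lemma sum_atLeastAtMost_double:
  fixes n :: nat
  shows "(\<Sum>i\<in>{1..2*n}. f i) = (\<Sum>k\<in>{1..n}. f k + f (n + k))"
proof -
  have "(\<Sum>i\<in>{1..2*n}. f i) = (\<Sum>i\<in>{1..n+n}. f i)" by (simp add: mult_2)
  also have "\<dots> = (\<Sum>i\<in>{1..n}. f i) + (\<Sum>i\<in>{n+1..n+n}. f i)"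
    by (rule sum.ub_add_nat) simp
  also have "(\<Sum>i\<in>{n+1..n+n}. f i) = (\<Sum>i\<in>{1..n}. f (n + i))"
    using sum.shift_bounds_cl_nat_ivl[of f 1 n n] by (simp add: add.commute)
  finally show ?thesis by (simp add: sum.distrib)
qed

lemma card_less_permutes:
  fixes \<pi> :: "nat \<Rightarrow> nat"
  assumes p: "\<pi> permutes {1..n}" and i: "i \<in> {1..n}"
  shows "card {j\<in>{1..n}. \<pi> j < \<pi> i} = \<pi> i - 1"
proof -
  have "\<pi> ` {j\<in>{1..n}. \<pi> j < \<pi> i} = {k\<in>\<pi> ` {1..n}. k < \<pi> i}" by blast
  also have "\<dots> = {1..<\<pi> i}"
  proof -
    have "\<pi> i \<in> {1..n}" using permutes_in_image[OF p] i by blast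
    then show ?thesis using permutes_image[OF p] by auto
  qed
  finally have "card (\<pi> ` {j\<in>{1..n}. \<pi> j < \<pi> i}) = \<pi> i - 1" by simp
  moreover have "inj_on \<pi> {j\<in>{1..n}. \<pi> j < \<pi> i}"
    using permutes_inj_on[OF p] by (rule inj_on_subset) blast
  ultimately show ?thesis by (simp add: card_image)
qed

lemma permutes_eq_if_order_preserving:
  fixes \<pi> \<sigma> :: "nat \<Rightarrow> nat"
  assumes p: "\<pi> permutes {1..n}" and s: "\<sigma> permutes {1..n}"
    and order: "\<And>i j. i \<in> {1..n} \<Longrightarrow> j \<in> {1..n} \<Longrightarrow> \<pi> j < \<pi> i \<Longrightarrow> \<sigma> j < \<sigma> i"
  shows "\<pi> = \<sigma>"
proof
  fix i
  show "\<pi> i = \<sigma> i"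
  proof (cases "i \<in> {1..n}")
    case False
    then show ?thesis using permutes_not_in[OF p] permutes_not_in[OF s] by metis
  next
    case True
    have "\<pi> j < \<pi> i \<longleftrightarrow> \<sigma> j < \<sigma> i" if j: "j \<in> {1..n}" for j
    proof
      show "\<pi> j < \<pi> i \<Longrightarrow> \<sigma> j < \<sigma> i" using order[OF True j] .
    next
      assume less: "\<sigma> j < \<sigma> i"
      then have "j \<noteq> i" by auto
      then have "\<pi> j \<noteq> \<pi> i" using permutes_inj[OF p] by (simp add: inj_eq)
      then show "\<pi> j < \<pi> i" using order[OF j True] less by (meson less_asym linorder_neqE_nat)
    qed
    then have "card {j\<in>{1..n}. \<pi> j < \<pi> i} = card {j\<in>{1..n}. \<sigma> j < \<sigma> i}"
      by (metis (mono_tags, lifting) Collect_cong)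
    moreover have "\<pi> i \<in> {1..n}" "\<sigma> i \<in> {1..n}"
      using permutes_in_image[OF p] permutes_in_image[OF s] True by blast+
    ultimately show ?thesis using card_less_permutes[OF p True] card_less_permutes[OF s True] by auto
  qed
qed

section \<open>Weighted term orders\<close>

lemma mweight_eq_sum:
  "finite A \<Longrightarrow> keys a \<subseteq> A \<Longrightarrow> mweight w a = (\<Sum>i\<in>A. lookup w i * real (lookup a i))"
  unfolding mweight_def by (rule sum.mono_neutral_left) (auto simp: in_keys_iff)

lemma mweight_add: "mweight w (a + b) = mweight w a + mweight w b"
proof -
  let ?A = "keys a \<union> keys b"
  have "keys (a + b) \<subseteq> ?A" by (rule keys_add)
  then show ?thesis
    by (simp add: mweight_eq_sum[of ?A] lookup_add sum.distrib distrib_left)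
qed

lemma mweight_single: "mweight w (single i 1) = lookup w i"
  unfolding mweight_def by simp

definition wt_le :: "(mon \<Rightarrow> mon \<Rightarrow> bool) \<Rightarrow> (nat \<Rightarrow>\<^sub>0 real) \<Rightarrow> mon \<Rightarrow> mon \<Rightarrow> bool" where
  "wt_le ord w a b \<longleftrightarrow> mweight w a < mweight w b \<or> (mweight w a = mweight w b \<and> ord a b)"

definition wt_less :: "(mon \<Rightarrow> mon \<Rightarrow> bool) \<Rightarrow> (nat \<Rightarrow>\<^sub>0 real) \<Rightarrow> mon \<Rightarrow> mon \<Rightarrow> bool" where
  "wt_less ord w a b \<longleftrightarrow> wt_le ord w a b \<and> a \<noteq> b"

lemma wt_less_if_mweight_less: "mweight w a < mweight w b \<Longrightarrow> wt_less ord w a b"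
  unfolding wt_less_def wt_le_def by auto

lemma mweight_le_if_wt_le: "wt_le ord w a b \<Longrightarrow> mweight w a \<le> mweight w b"
  unfolding wt_le_def by auto

context
  fixes ord :: "mon \<Rightarrow> mon \<Rightarrow> bool"
  assumes mo: "monomial_order ord"
begin

lemma monomial_orderD:
  "ord a a" "ord a b \<Longrightarrow> ord b a \<Longrightarrow> a = b" "ord a b \<Longrightarrow> ord b c \<Longrightarrow> ord a c"
  "ord a b \<or> ord b a" "ord a b \<Longrightarrow> ord (a + c) (b + c)"
  using mo unfolding monomial_order_def by blast+

lemma wt_le_refl: "wt_le ord w a a"
  unfolding wt_le_def using monomial_orderD(1) by blast

lemma wt_le_total: "wt_le ord w a b \<or> wt_le ord w b a"
  unfolding wt_le_def using monomial_orderD(4)[of a b] by linarith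

lemma wt_le_antisym: "wt_le ord w a b \<Longrightarrow> wt_le ord w b a \<Longrightarrow> a = b"
  unfolding wt_le_def using monomial_orderD(2)[of a b] by linarith

lemma wt_le_trans: "wt_le ord w a b \<Longrightarrow> wt_le ord w b c \<Longrightarrow> wt_le ord w a c"
  unfolding wt_le_def using monomial_orderD(3)[of a b c] by (smt (verit))

lemma wt_le_add: "wt_le ord w a b \<Longrightarrow> wt_le ord w (a + c) (b + c)"
  unfolding wt_le_def mweight_add using monomial_orderD(5)[of a b c] by auto

lemma wt_less_add: "wt_less ord w a b \<Longrightarrow> wt_less ord w (a + c) (b + c)"
  unfolding wt_less_def using wt_le_add by auto

lemma wt_less_imp_not_le: "wt_less ord w a b \<Longrightarrow> \<not> wt_le ord w b a"
  unfolding wt_less_def using wt_le_antisym by blast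

lemma wt_less_linear: "a \<noteq> b \<Longrightarrow> wt_less ord w a b \<or> wt_less ord w b a"
  unfolding wt_less_def using wt_le_total by blast

lemma wt_less_trans: "wt_less ord w a b \<Longrightarrow> wt_less ord w b c \<Longrightarrow> wt_less ord w a c"
  unfolding wt_less_def using wt_le_trans wt_le_antisym by blast

lemma wt_less_add_cancel:
  assumes "wt_less ord w (a + c) (b + c)"
  shows "wt_less ord w a b"
proof -
  have "a \<noteq> b" using assms unfolding wt_less_def by auto
  moreover have "\<not> wt_less ord w b a"
    using assms wt_less_add wt_less_imp_not_le unfolding wt_less_def by blast
  ultimately show ?thesis using wt_less_linear by blast
qed

lemma wt_le_greatest_exists:
  "finite S \<Longrightarrow> S \<noteq> {} \<Longrightarrow> \<exists>m\<in>S. \<forall>b\<in>S. wt_le ord w b m"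
proof (induction S rule: finite_ne_induct)
  case (singleton x)
  then show ?case using wt_le_refl by auto
next
  case (insert x F)
  then obtain m where m: "m \<in> F" "\<forall>b\<in>F. wt_le ord w b m" by blast
  show ?case
  proof (cases "wt_le ord w m x")
    case True
    then show ?thesis using m wt_le_trans wt_le_refl by blast
  next
    case False
    then show ?thesis using m wt_le_total by blast
  qed
qed

lemma init_mon_greatest:
  assumes "f \<noteq> 0"
  shows "init_mon ord w f \<in> keys f"
    and "\<And>b. b \<in> keys f \<Longrightarrow> wt_le ord w b (init_mon ord w f)"
proof -
  obtain m where m: "m \<in> keys f" "\<forall>b\<in>keys f. wt_le ord w b m"
    using wt_le_greatest_exists[of "keys f"] assms by auto
  have "\<exists>!a. a \<in> keys f \<and> (\<forall>b\<in>keys f. b \<noteq> a \<longrightarrow> wt_le ord w b a)"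
  proof (rule ex1I[of _ m])
    fix a assume a: "a \<in> keys f \<and> (\<forall>b\<in>keys f. b \<noteq> a \<longrightarrow> wt_le ord w b a)"
    show "a = m"
    proof (rule ccontr)
      assume "a \<noteq> m"
      then have "wt_le ord w m a" "wt_le ord w a m" using a m by auto
      then show False using wt_le_antisym \<open>a \<noteq> m\<close> by blast
    qed
  qed (use m in blast)
  then have "init_mon ord w f \<in> keys f
      \<and> (\<forall>b\<in>keys f. b \<noteq> init_mon ord w f \<longrightarrow> wt_le ord w b (init_mon ord w f))"
    unfolding init_mon_def wt_le_def by (rule theI')
  then show "init_mon ord w f \<in> keys f" "\<And>b. b \<in> keys f \<Longrightarrow> wt_le ord w b (init_mon ord w f)"
    using wt_le_refl by auto
qed

lemma init_mon_eqI:
  assumes "m \<in> keys f" "\<And>b. b \<in> keys f \<Longrightarrow> wt_le ord w b m"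
  shows "init_mon ord w f = m"
proof -
  have "f \<noteq> 0" using assms by auto
  then have "wt_le ord w m (init_mon ord w f)" "init_mon ord w f \<in> keys f"
    using init_mon_greatest assms(1) by blast+
  then show ?thesis using wt_le_antisym assms(2) by metis
qed

end

section \<open>The toric exponent map\<close>

lemma svec_coord_first:
  "1 \<le> n \<Longrightarrow> i \<in> {1..2*n} \<Longrightarrow> svec n i 1 = (if i \<le> n then 1 else 0)"
  by (auto simp: svec_def evec_def)

lemma svec_coord_middle:
  "i \<in> {1..2*n} \<Longrightarrow> k \<in> {1..<n} \<Longrightarrow>
     svec n i (k + 1) = (if i = k then 1 else 0) + (if i = n + k then 1 else 0)"
  by (auto simp: svec_def evec_def)

lemma svec_coord_last: "1 \<le> n \<Longrightarrow> i \<in> {1..2*n} \<Longrightarrow> svec n i (n + 1) = 1"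
  by (auto simp: svec_def evec_def)

lemma svec_pair: "1 \<le> n \<Longrightarrow> k \<in> {1..n} \<Longrightarrow> svec n k j = evec 1 j + svec n (n + k) j"
  unfolding svec_def by (cases "k < n") auto

lemma toric_exp_eq_sum:
  "finite A \<Longrightarrow> keys a \<subseteq> A \<Longrightarrow> toric_exp n a j = (\<Sum>i\<in>A. lookup a i * svec n i j)"
  unfolding toric_exp_def by (rule sum.mono_neutral_left) (auto simp: in_keys_iff)

lemma toric_exp_add: "toric_exp n (a + b) j = toric_exp n a j + toric_exp n b j"
proof -
  let ?A = "keys a \<union> keys b"
  have "keys (a + b) \<subseteq> ?A" by (rule keys_add)
  then show ?thesis
    by (simp add: toric_exp_eq_sum[of ?A] lookup_add sum.distrib distrib_right)
qed

lemma toric_exp_single: "toric_exp n (single i 1) j = svec n i j"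
  unfolding toric_exp_def by simp

abbreviation pair_mon :: "nat \<Rightarrow> nat \<Rightarrow> nat \<Rightarrow> mon" where
  "pair_mon n i j \<equiv> single i 1 + single (n + j) 1"

lemma toric_exp_swap:
  assumes "1 \<le> n" "i \<in> {1..n}" "j \<in> {1..n}"
  shows "toric_exp n (c + pair_mon n j i) = toric_exp n (c + pair_mon n i j)"
proof
  fix x
  show "toric_exp n (c + pair_mon n j i) x = toric_exp n (c + pair_mon n i j) x"
    unfolding toric_exp_add toric_exp_single svec_pair[OF assms(1,2)] svec_pair[OF assms(1,3)]
    by (simp only: ac_simps)
qed

lemma keys_pair_mon: "i \<in> {1..n} \<Longrightarrow> j \<in> {1..n} \<Longrightarrow> keys (pair_mon n i j) \<subseteq> {1..2*n}"
  using keys_add[of "single i (1::nat)" "single (n + j) 1"] by auto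

lemma toric_exp_coord:
  assumes "keys a \<subseteq> {1..2*n}" "\<And>i. i \<in> {1..2*n} \<Longrightarrow> svec n i j = c i"
  shows "toric_exp n a j = (\<Sum>i\<in>{1..2*n}. lookup a i * c i)"
  using assms by (simp add: toric_exp_eq_sum[of "{1..2*n}"])

lemma toric_exp_coord_first:
  assumes "1 \<le> n" "keys a \<subseteq> {1..2*n}"
  shows "toric_exp n a 1 = (\<Sum>i\<in>{1..n}. lookup a i)"
proof -
  have "toric_exp n a 1 = (\<Sum>i\<in>{1..2*n}. lookup a i * (if i \<le> n then 1 else 0))"
    by (rule toric_exp_coord[OF assms(2) svec_coord_first[OF assms(1)]])
  also have "\<dots> = (\<Sum>i\<in>{1..2*n}. if i \<le> n then lookup a i else 0)"
    by (intro sum.cong) auto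
  also have "\<dots> = (\<Sum>i\<in>{i\<in>{1..2*n}. i \<le> n}. lookup a i)"
    by (rule sum.inter_filter[symmetric]) simp
  also have "{i\<in>{1..2*n}. i \<le> n} = {1..n}" by auto
  finally show ?thesis .
qed

lemma toric_exp_coord_middle:
  assumes "keys a \<subseteq> {1..2*n}" "k \<in> {1..<n}"
  shows "toric_exp n a (k + 1) = lookup a k + lookup a (n + k)"
proof -
  have "toric_exp n a (k + 1)
      = (\<Sum>i\<in>{1..2*n}. lookup a i * ((if i = k then 1 else 0) + (if i = n + k then 1 else 0)))"
    by (rule toric_exp_coord[OF assms(1) svec_coord_middle[OF _ assms(2)]])
  also have "\<dots> = (\<Sum>i\<in>{1..2*n}. (if i = k then lookup a i else 0) + (if i = n + k then lookup a i else 0))"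
    by (intro sum.cong) auto
  also have "\<dots> = lookup a k + lookup a (n + k)"
    using assms(2) by (simp add: sum.distrib)
  finally show ?thesis .
qed

lemma toric_exp_coord_last:
  assumes "1 \<le> n" "keys a \<subseteq> {1..2*n}"
  shows "toric_exp n a (n + 1) = (\<Sum>k\<in>{1..n}. lookup a k + lookup a (n + k))"
proof -
  have "toric_exp n a (n + 1) = (\<Sum>i\<in>{1..2*n}. lookup a i * 1)"
    by (rule toric_exp_coord[OF assms(2) svec_coord_last[OF assms(1)]])
  then show ?thesis by (simp only: mult_1_right sum_atLeastAtMost_double)
qed

lemma toric_fibre_invariants:
  assumes n: "1 \<le> n" and a: "keys a \<subseteq> {1..2*n}" and b: "keys b \<subseteq> {1..2*n}"
    and fibre: "toric_exp n a = toric_exp n b"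
  shows "(\<Sum>i\<in>{1..n}. lookup a i) = (\<Sum>i\<in>{1..n}. lookup b i)"
    and "\<And>k. k \<in> {1..n} \<Longrightarrow> lookup a k + lookup a (n + k) = lookup b k + lookup b (n + k)"
proof -
  show "(\<Sum>i\<in>{1..n}. lookup a i) = (\<Sum>i\<in>{1..n}. lookup b i)"
    using toric_exp_coord_first[OF n a] toric_exp_coord_first[OF n b] fibre by metis
  have below_n: "lookup a k + lookup a (n + k) = lookup b k + lookup b (n + k)" if "k \<in> {1..<n}" for k
    using toric_exp_coord_middle[OF a that] toric_exp_coord_middle[OF b that] fibre by metis
  have "(\<Sum>k\<in>{1..n}. lookup a k + lookup a (n + k)) = (\<Sum>k\<in>{1..n}. lookup b k + lookup b (n + k))"
    using toric_exp_coord_last[OF n a] toric_exp_coord_last[OF n b] fibre by metis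
  moreover have "{1..n} = insert n {1..<n}" using n by auto
  ultimately have "lookup a n + lookup a (n + n) = lookup b n + lookup b (n + n)"
    using below_n by simp
  then show "lookup a k + lookup a (n + k) = lookup b k + lookup b (n + k)" if "k \<in> {1..n}" for k
    using below_n that by (cases "k = n") auto
qed

section \<open>Standard monomials\<close>

definition nonstandard :: "nat \<Rightarrow> (nat \<Rightarrow> nat) \<Rightarrow> mon \<Rightarrow> bool" where
  "nonstandard n \<pi> m \<longleftrightarrow>
     (\<exists>i\<in>{1..n}. \<exists>j\<in>{1..n}. \<pi> j < \<pi> i \<and> lookup m i \<noteq> 0 \<and> lookup m (n + j) \<noteq> 0)"

lemma nonstandard_add: "nonstandard n \<pi> a \<Longrightarrow> nonstandard n \<pi> (b + a)"
  unfolding nonstandard_def by (auto simp: lookup_add)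

text \<open>If p k < p' k then q k > 0, so p vanishes above k in the \<pi>-order, while p and p'
  agree below k.\<close>

lemma inversion_free_sum_less:
  fixes p q p' q' \<pi> :: "nat \<Rightarrow> nat"
  assumes \<pi>: "inj_on \<pi> {1..n}"
    and free: "\<And>i j. i \<in> {1..n} \<Longrightarrow> j \<in> {1..n} \<Longrightarrow> \<pi> j < \<pi> i \<Longrightarrow> p i = 0 \<or> q j = 0"
    and col: "\<And>k. k \<in> {1..n} \<Longrightarrow> p k + q k = p' k + q' k"
    and k: "k \<in> {1..n}" "p k < p' k"
    and below: "\<And>j. j \<in> {1..n} \<Longrightarrow> \<pi> j < \<pi> k \<Longrightarrow> p j = p' j"
  shows "(\<Sum>i\<in>{1..n}. p i) < (\<Sum>i\<in>{1..n}. p' i)"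
proof (rule sum_strict_mono_ex1)
  have "q k \<noteq> 0" using col[OF k(1)] k(2) by linarith
  then have "p i = 0" if "i \<in> {1..n}" "\<pi> k < \<pi> i" for i
    using free[OF that(1) k(1) that(2)] by auto
  moreover have "\<pi> i < \<pi> k \<or> i = k \<or> \<pi> k < \<pi> i" if "i \<in> {1..n}" for i
    using inj_onD[OF \<pi> _ that k(1)] by fastforce
  ultimately show "\<forall>i\<in>{1..n}. p i \<le> p' i"
    using below k(2) by fastforce
qed (use k in auto)

lemma inversion_free_split_unique:
  fixes p q p' q' \<pi> :: "nat \<Rightarrow> nat"
  assumes \<pi>: "inj_on \<pi> {1..n}"
    and free: "\<And>i j. i \<in> {1..n} \<Longrightarrow> j \<in> {1..n} \<Longrightarrow> \<pi> j < \<pi> i \<Longrightarrow> p i = 0 \<or> q j = 0"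
    and free': "\<And>i j. i \<in> {1..n} \<Longrightarrow> j \<in> {1..n} \<Longrightarrow> \<pi> j < \<pi> i \<Longrightarrow> p' i = 0 \<or> q' j = 0"
    and col: "\<And>k. k \<in> {1..n} \<Longrightarrow> p k + q k = p' k + q' k"
    and total: "(\<Sum>i\<in>{1..n}. p i) = (\<Sum>i\<in>{1..n}. p' i)"
    and k: "k \<in> {1..n}"
  shows "p k = p' k"
proof (rule ccontr)
  assume "p k \<noteq> p' k"
  then obtain k where k: "k \<in> {1..n}" "p k \<noteq> p' k"
    and least: "\<And>j. j \<in> {1..n} \<Longrightarrow> p j \<noteq> p' j \<Longrightarrow> \<pi> k \<le> \<pi> j"
    using ex_has_least_nat[of "\<lambda>k. k \<in> {1..n} \<and> p k \<noteq> p' k" k \<pi>] k by blast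
  have below: "p j = p' j" if "j \<in> {1..n}" "\<pi> j < \<pi> k" for j
    using least that by force
  show False
  proof (cases "p k < p' k")
    case True
    then show False
      using inversion_free_sum_less[where p = p and q = q and p' = p' and q' = q', OF \<pi> free col
          k(1) True below] total by simp
  next
    case False
    then have "p' k < p k" using k by simp
    then show False
      using inversion_free_sum_less[where p = p' and q = q' and p' = p and q' = q, OF \<pi> free'
          col[symmetric] k(1) _ below[symmetric]] total by simp
  qed
qed

lemma standard_mon_unique:
  assumes n: "1 \<le> n" and \<pi>: "inj_on \<pi> {1..n}"
    and a: "keys a \<subseteq> {1..2*n}" and b: "keys b \<subseteq> {1..2*n}"
    and fibre: "toric_exp n a = toric_exp n b"
    and std: "\<not> nonstandard n \<pi> a" "\<not> nonstandard n \<pi> b"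
  shows "a = b"
proof (rule poly_mapping_eqI)
  note inv = toric_fibre_invariants[OF n a b fibre]
  have first: "lookup a k = lookup b k" if "k \<in> {1..n}" for k
    by (rule inversion_free_split_unique[OF \<pi> _ _ inv(2) inv(1) that])
      (use std in \<open>auto simp: nonstandard_def\<close>)
  fix k
  consider "k \<in> {1..n}" | j where "j \<in> {1..n}" "k = n + j" | "k \<notin> {1..2*n}"
  proof (cases "k \<in> {1..2*n}")
    case True
    then show ?thesis
      using that(1) that(2)[of "k - n"] by (cases "k \<le> n") auto
  qed (use that(3) in blast)
  then show "lookup a k = lookup b k"
  proof cases
    case 2
    then show ?thesis using first inv(2) by fastforce
  next
    case 3
    then have "k \<notin> keys a" "k \<notin> keys b" using a b by auto
    then show ?thesis by (simp add: in_keys_iff)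
  qed (rule first)
qed

lemma nonstandard_decompose:
  assumes "nonstandard n \<pi> x"
  obtains i j y where "i \<in> {1..n}" "j \<in> {1..n}" "\<pi> j < \<pi> i"
    and "x = y + pair_mon n i j" "keys y \<subseteq> keys x"
proof -
  obtain i j where ij: "i \<in> {1..n}" "j \<in> {1..n}" "\<pi> j < \<pi> i"
    and nz: "lookup x i \<noteq> 0" "lookup x (n + j) \<noteq> 0"
    using assms unfolding nonstandard_def by blast
  let ?y = "x - pair_mon n i j"
  have "i \<noteq> n + j" using ij by auto
  then have "x = ?y + pair_mon n i j"
    using nz by (intro poly_mapping_eqI) (auto simp: lookup_add lookup_minus lookup_single when_def)
  moreover have "keys ?y \<subseteq> keys x"
    by (auto simp: in_keys_iff lookup_minus)
  ultimately show ?thesis using that ij by blast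
qed

lemma nonstandard_pair_mon:
  "i \<in> {1..n} \<Longrightarrow> j \<in> {1..n} \<Longrightarrow> nonstandard n \<pi> (pair_mon n i j) \<longleftrightarrow> \<pi> j < \<pi> i"
  unfolding nonstandard_def by (auto simp: lookup_add lookup_single when_def)

section \<open>Weight vectors inducing a permutation\<close>

text \<open>swap_lead ord n w i j says that t_i t_{n+j} is the leading term of the binomial
  t_i t_{n+j} - t_j t_{n+i}.\<close>

definition swap_lead :: "(mon \<Rightarrow> mon \<Rightarrow> bool) \<Rightarrow> nat \<Rightarrow> (nat \<Rightarrow>\<^sub>0 real) \<Rightarrow> nat \<Rightarrow> nat \<Rightarrow> bool" where
  "swap_lead ord n w i j \<longleftrightarrow> wt_less ord w (pair_mon n j i) (pair_mon n i j)"

definition induces :: "(mon \<Rightarrow> mon \<Rightarrow> bool) \<Rightarrow> nat \<Rightarrow> (nat \<Rightarrow>\<^sub>0 real) \<Rightarrow> (nat \<Rightarrow> nat) \<Rightarrow> bool" where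
  "induces ord n w \<pi> \<longleftrightarrow>
     (\<forall>i\<in>{1..n}. \<forall>j\<in>{1..n}. i \<noteq> j \<longrightarrow> (swap_lead ord n w i j \<longleftrightarrow> \<pi> j < \<pi> i))"

definition weight_gap :: "nat \<Rightarrow> (nat \<Rightarrow>\<^sub>0 real) \<Rightarrow> nat \<Rightarrow> real" where
  "weight_gap n w i = lookup w i - lookup w (n + i)"

lemma mweight_pair_mon: "mweight w (pair_mon n i j) = lookup w i + lookup w (n + j)"
  by (simp add: mweight_add mweight_single)

lemma swap_lead_irrefl: "\<not> swap_lead ord n w i i"
  unfolding swap_lead_def wt_less_def by simp

lemma gap_le_if_swap_lead: "swap_lead ord n w i j \<Longrightarrow> weight_gap n w j \<le> weight_gap n w i"
  unfolding swap_lead_def wt_less_def weight_gap_def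
  using mweight_le_if_wt_le[of ord w "pair_mon n j i" "pair_mon n i j"] by (simp add: mweight_pair_mon)

lemma gap_le_if_induces:
  assumes "induces ord n w \<pi>" "i \<in> {1..n}" "j \<in> {1..n}" "\<pi> j < \<pi> i"
  shows "weight_gap n w j \<le> weight_gap n w i"
  using assms gap_le_if_swap_lead unfolding induces_def by (metis less_irrefl)

context
  fixes ord :: "mon \<Rightarrow> mon \<Rightarrow> bool"
  assumes mo: "monomial_order ord"
begin

lemma swap_lead_total:
  assumes "i \<in> {1..n}" "j \<in> {1..n}" "i \<noteq> j"
  shows "swap_lead ord n w i j \<or> swap_lead ord n w j i"
proof -
  have "lookup (pair_mon n j i) i \<noteq> lookup (pair_mon n i j) i"
    using assms by (simp add: lookup_add lookup_single when_def)
  then have "pair_mon n j i \<noteq> pair_mon n i j" by metis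
  then show ?thesis unfolding swap_lead_def using wt_less_linear[OF mo] by blast
qed

text \<open>Transitivity: add the two defining inequalities, shifted by t_k t_{n+j} and
  t_i t_{n+j}, and cancel t_j t_{n+j}.\<close>

lemma swap_lead_trans:
  assumes "swap_lead ord n w i j" "swap_lead ord n w j k"
  shows "swap_lead ord n w i k"
proof -
  have "wt_less ord w (pair_mon n j i + pair_mon n k j) (pair_mon n i j + pair_mon n k j)"
    using assms(1) unfolding swap_lead_def by (rule wt_less_add[OF mo])
  moreover have "wt_less ord w (pair_mon n k j + pair_mon n i j) (pair_mon n j k + pair_mon n i j)"
    using assms(2) unfolding swap_lead_def by (rule wt_less_add[OF mo])
  ultimately have "wt_less ord w (pair_mon n j i + pair_mon n k j) (pair_mon n j k + pair_mon n i j)"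
    using wt_less_trans[OF mo] by (simp add: ac_simps)
  then have "wt_less ord w (pair_mon n k i + pair_mon n j j) (pair_mon n i k + pair_mon n j j)"
    by (simp add: ac_simps)
  then show ?thesis unfolding swap_lead_def by (rule wt_less_add_cancel[OF mo])
qed

text \<open>The permutation is read off as \<pi> i = 1 + #{j. swap_lead i j}.\<close>

lemma induces_exists:
  assumes n: "1 \<le> n"
  shows "\<exists>\<pi>. \<pi> permutes {1..n} \<and> induces ord n w \<pi>"
proof -
  let ?R = "swap_lead ord n w"
  define \<pi> where "\<pi> i = (if i \<in> {1..n} then Suc (card {j\<in>{1..n}. ?R i j}) else i)" for i
  have mono: "\<pi> j < \<pi> i" if ij: "i \<in> {1..n}" "j \<in> {1..n}" "?R i j" for i j
  proof -
    have "{k\<in>{1..n}. ?R j k} \<subset> {k\<in>{1..n}. ?R i k}"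
      using swap_lead_trans[OF ij(3)] swap_lead_irrefl ij by blast
    then have "card {k\<in>{1..n}. ?R j k} < card {k\<in>{1..n}. ?R i k}"
      by (rule psubset_card_mono[rotated]) simp
    then show ?thesis unfolding \<pi>_def using ij by simp
  qed
  have range: "\<pi> i \<in> {1..n}" if i: "i \<in> {1..n}" for i
  proof -
    have "card {j\<in>{1..n}. ?R i j} \<le> card ({1..n} - {i})"
      using swap_lead_irrefl by (intro card_mono) auto
    also have "\<dots> = n - 1" using i by simp
    finally show ?thesis unfolding \<pi>_def using i n by auto
  qed
  have iff: "?R i j \<longleftrightarrow> \<pi> j < \<pi> i" if "i \<in> {1..n}" "j \<in> {1..n}" "i \<noteq> j" for i j
    using mono swap_lead_total[OF that] that by (meson less_asym)
  have "inj_on \<pi> {1..n}"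
  proof (rule inj_onI, rule ccontr)
    fix i j assume "i \<in> {1..n}" "j \<in> {1..n}" "\<pi> i = \<pi> j" "i \<noteq> j"
    then show False using iff swap_lead_total by (metis less_irrefl)
  qed
  moreover have "\<pi> ` {1..n} = {1..n}"
    using range \<open>inj_on \<pi> {1..n}\<close> by (intro endo_inj_surj) auto
  ultimately have "\<pi> permutes {1..n}"
    by (intro bij_imp_permutes) (auto simp: bij_betw_def \<pi>_def)
  moreover have "induces ord n w \<pi>"
    unfolding induces_def using iff by blast
  ultimately show ?thesis by blast
qed

lemma induces_if_gaps_strict:
  assumes p: "\<pi> permutes {1..n}"
    and gaps: "\<And>i j. i \<in> {1..n} \<Longrightarrow> j \<in> {1..n} \<Longrightarrow> \<pi> j < \<pi> i \<Longrightarrow> weight_gap n w j < weight_gap n w i"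
  shows "induces ord n w \<pi>"
  unfolding induces_def
proof (intro ballI impI)
  fix i j assume ij: "i \<in> {1..n}" "j \<in> {1..n}" "i \<noteq> j"
  then have "\<pi> i \<noteq> \<pi> j" using permutes_inj_on[OF p] by (meson inj_onD)
  then consider "\<pi> j < \<pi> i" | "\<pi> i < \<pi> j" by linarith
  then show "swap_lead ord n w i j \<longleftrightarrow> \<pi> j < \<pi> i"
  proof cases
    case 1
    have "mweight w (pair_mon n j i) < mweight w (pair_mon n i j)"
      using gaps[OF ij(1,2) 1] by (simp add: mweight_pair_mon weight_gap_def)
    then have "swap_lead ord n w i j"
      unfolding swap_lead_def by (rule wt_less_if_mweight_less)
    with 1 show ?thesis by simp
  next
    case 2
    have "mweight w (pair_mon n i j) < mweight w (pair_mon n j i)"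
      using gaps[OF ij(2,1) 2] by (simp add: mweight_pair_mon weight_gap_def)
    then have "\<not> swap_lead ord n w i j"
      unfolding swap_lead_def wt_less_def using mweight_le_if_wt_le by (meson not_le)
    with 2 show ?thesis by simp
  qed
qed

end

lemma induces_unique:
  fixes \<pi> \<sigma> :: "nat \<Rightarrow> nat"
  assumes p: "\<pi> permutes {1..n}" and s: "\<sigma> permutes {1..n}"
    and "induces ord n w \<pi>" "induces ord n w \<sigma>"
  shows "\<pi> = \<sigma>"
proof (rule permutes_eq_if_order_preserving[OF p s])
  fix i j assume "i \<in> {1..n}" "j \<in> {1..n}" "\<pi> j < \<pi> i"
  moreover have "i \<noteq> j" using \<open>\<pi> j < \<pi> i\<close> by auto
  ultimately show "\<sigma> j < \<sigma> i" using assms(3,4) unfolding induces_def by blast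
qed

section \<open>The initial ideals of the toric ideal\<close>

definition perm_potential :: "nat \<Rightarrow> (nat \<Rightarrow> nat) \<Rightarrow> mon \<Rightarrow> nat" where
  "perm_potential n \<pi> x = (\<Sum>i\<in>{1..n}. \<pi> i * lookup x i)"

lemma perm_potential_add: "perm_potential n \<pi> (a + b) = perm_potential n \<pi> a + perm_potential n \<pi> b"
  unfolding perm_potential_def by (simp add: lookup_add sum.distrib distrib_left)

lemma perm_potential_single:
  "perm_potential n \<pi> (single k 1) = (if k \<in> {1..n} then \<pi> k else 0)"
proof -
  have "perm_potential n \<pi> (single k 1) = (\<Sum>i\<in>{1..n}. if i = k then \<pi> i else 0)"
    unfolding perm_potential_def by (intro sum.cong) (auto simp: lookup_single when_def)
  then show ?thesis by simp
qed

lemma binomial_in_toric_ideal: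
  assumes "keys a \<subseteq> {1..2*n}" "keys b \<subseteq> {1..2*n}" "toric_exp n a = toric_exp n b"
  shows "single a c - single b c \<in> toric_ideal n"
proof (cases "a = b")
  case True
  then show ?thesis by (simp add: toric_ideal_def poly_ring_def toric_image_coeff_def)
next
  case False
  let ?f = "single a c - single b c"
  have keys: "keys ?f \<subseteq> {a, b}"
    by (auto simp: in_keys_iff lookup_minus lookup_single when_def split: if_splits)
  have "toric_image_coeff n ?f e = 0" for e
  proof (cases "toric_exp n a = e")
    case True
    then have "{x \<in> keys ?f. toric_exp n x = e} = keys ?f" using keys assms(3) by auto
    then have "toric_image_coeff n ?f e = sum (lookup ?f) {a, b}"
      unfolding toric_image_coeff_def using keys by (intro sum.mono_neutral_left) (auto simp: in_keys_iff)
    also have "\<dots> = 0" using False by (simp add: lookup_minus lookup_single)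
    finally show ?thesis .
  next
    case False
    then have empty: "{x \<in> keys ?f. toric_exp n x = e} = {}" using keys assms(3) by auto
    show ?thesis unfolding toric_image_coeff_def empty by simp
  qed
  moreover have "?f \<in> poly_ring (2*n)"
    using keys assms(1,2) unfolding poly_ring_def by blast
  ultimately show ?thesis unfolding toric_ideal_def by blast
qed

context
  fixes ord :: "mon \<Rightarrow> mon \<Rightarrow> bool"
  assumes mo: "monomial_order ord"
begin

lemma induces_swap_less:
  assumes "induces ord n w \<pi>" "i \<in> {1..n}" "j \<in> {1..n}" "\<pi> j < \<pi> i"
  shows "wt_less ord w (y + pair_mon n j i) (y + pair_mon n i j)"
proof -
  have "swap_lead ord n w i j" using assms unfolding induces_def by fastforce
  then show ?thesis unfolding swap_lead_def using wt_less_add[OF mo] by (metis add.commute)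
qed

text \<open>Induction on the potential: a nonstandard monomial can be swapped to a smaller
  one in the same fibre.\<close>

lemma standard_mon_wt_least:
  assumes n: "1 \<le> n" and \<pi>: "inj_on \<pi> {1..n}" and ind: "induces ord n w \<pi>"
    and g: "keys g \<subseteq> {1..2*n}" "\<not> nonstandard n \<pi> g"
  shows "keys x \<subseteq> {1..2*n} \<Longrightarrow> toric_exp n x = toric_exp n g \<Longrightarrow> wt_le ord w g x"
proof (induction "perm_potential n \<pi> x" arbitrary: x rule: less_induct)
  case less
  show ?case
  proof (cases "nonstandard n \<pi> x")
    case False
    then have "g = x" using standard_mon_unique[OF n \<pi> g(1) less.prems(1)] less.prems(2) g(2) by metis
    then show ?thesis using wt_le_refl[OF mo] by simp
  next
    case True
    then obtain i j y where ij: "i \<in> {1..n}" "j \<in> {1..n}" "\<pi> j < \<pi> i"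
      and x: "x = y + pair_mon n i j" "keys y \<subseteq> keys x"
      by (rule nonstandard_decompose)
    let ?x' = "y + pair_mon n j i"
    have "keys ?x' \<subseteq> {1..2*n}"
      using keys_add[of y] keys_pair_mon[OF ij(2,1)] x(2) less.prems(1) by blast
    moreover have "toric_exp n ?x' = toric_exp n g"
      using toric_exp_swap[OF n ij(1,2)] x(1) less.prems(2) by simp
    moreover have "perm_potential n \<pi> ?x' < perm_potential n \<pi> x"
      using ij x(1) by (simp add: perm_potential_add perm_potential_single)
    ultimately have "wt_le ord w g ?x'" using less.hyps by blast
    moreover have "wt_less ord w ?x' x" using induces_swap_less[OF ind ij] x(1) by simp
    ultimately show ?thesis using wt_le_trans[OF mo] unfolding wt_less_def by blast
  qed
qed

text \<open>Conversely, an initial monomial is nonstandard: otherwise it would be the w-least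
  element of its fibre, while the fibre must contain another monomial of f for the
  coefficients of the toric image to cancel.\<close>

lemma init_mon_nonstandard:
  assumes n: "1 \<le> n" and \<pi>: "inj_on \<pi> {1..n}" and ind: "induces ord n w \<pi>"
    and f: "f \<in> toric_ideal n" "f \<noteq> 0"
  shows "nonstandard n \<pi> (init_mon ord w f)"
proof (rule ccontr)
  assume std: "\<not> nonstandard n \<pi> (init_mon ord w f)"
  let ?m = "init_mon ord w f"
  note greatest = init_mon_greatest[OF mo f(2), where w = w]
  have ring: "\<And>a. a \<in> keys f \<Longrightarrow> keys a \<subseteq> {1..2*n}" and cancel: "toric_image_coeff n f (toric_exp n ?m) = 0"
    using f(1) unfolding toric_ideal_def poly_ring_def by auto
  have "\<exists>m'\<in>keys f. toric_exp n m' = toric_exp n ?m \<and> m' \<noteq> ?m"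
  proof (rule ccontr)
    assume "\<not> ?thesis"
    then have "{a \<in> keys f. toric_exp n a = toric_exp n ?m} = {?m}" using greatest(1) by auto
    then show False using cancel greatest(1) by (simp add: toric_image_coeff_def in_keys_iff)
  qed
  then obtain m' where m': "m' \<in> keys f" "toric_exp n m' = toric_exp n ?m" "m' \<noteq> ?m" by blast
  have "wt_le ord w ?m m'"
    by (rule standard_mon_wt_least[OF n \<pi> ind ring[OF greatest(1)] std ring[OF m'(1)] m'(2)])
  moreover have "wt_le ord w m' ?m" using greatest(2)[OF m'(1)] .
  ultimately show False using wt_le_antisym[OF mo] m'(3) by blast
qed

lemma nonstandard_init_form:
  assumes n: "1 \<le> n" and ind: "induces ord n w \<pi>"
    and m: "keys m \<subseteq> {1..2*n}" "nonstandard n \<pi> m" and c: "c \<noteq> 0"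
  shows "\<exists>f\<in>toric_ideal n. f \<noteq> 0 \<and> init_form ord w f = single m c"
proof -
  obtain i j y where ij: "i \<in> {1..n}" "j \<in> {1..n}" "\<pi> j < \<pi> i"
    and y: "m = y + pair_mon n i j" "keys y \<subseteq> keys m"
    using m(2) by (rule nonstandard_decompose)
  let ?m' = "y + pair_mon n j i"
  let ?f = "single m c - single ?m' c"
  have less: "wt_less ord w ?m' m" using induces_swap_less[OF ind ij] y(1) by simp
  then have ne: "?m' \<noteq> m" by (simp add: wt_less_def)
  have "?f \<in> toric_ideal n"
  proof (rule binomial_in_toric_ideal[OF m(1)])
    show "keys ?m' \<subseteq> {1..2*n}"
      using keys_add[of y] keys_pair_mon[OF ij(2,1)] y(2) m(1) by blast
    show "toric_exp n m = toric_exp n ?m'" using toric_exp_swap[OF n ij(1,2)] y(1) by simp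
  qed
  moreover have lookup_f: "lookup ?f a = (if a = m then c else if a = ?m' then - c else 0)" for a
    using ne by (auto simp: lookup_minus lookup_single when_def)
  moreover have keys: "keys ?f = {m, ?m'}"
    using c ne by (auto simp: in_keys_iff lookup_f split: if_splits)
  then have "?f \<noteq> 0" by auto
  moreover have "init_mon ord w ?f = m"
    using keys less wt_le_refl[OF mo] by (intro init_mon_eqI[OF mo]) (auto simp: wt_less_def)
  ultimately show ?thesis
    by (intro bexI[of _ ?f]) (auto simp: init_form_def simp del: lookup_minus)
qed

end

text \<open>The monomial ideal generated by the t_i t_{n+j} with \<pi> j < \<pi> i, described as the
  polynomials all of whose monomials are nonstandard.\<close>

definition nonstandard_ideal :: "nat \<Rightarrow> (nat \<Rightarrow> nat) \<Rightarrow> cpoly set" where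
  "nonstandard_ideal n \<pi> = {p \<in> poly_ring (2*n). \<forall>a\<in>keys p. nonstandard n \<pi> a}"

lemma is_ideal_nonstandard_ideal: "is_ideal (2*n) (nonstandard_ideal n \<pi>)"
  unfolding is_ideal_def
proof (intro conjI ballI)
  show "nonstandard_ideal n \<pi> \<subseteq> poly_ring (2*n)" "0 \<in> nonstandard_ideal n \<pi>"
    unfolding nonstandard_ideal_def poly_ring_def by auto
next
  fix x y assume "x \<in> nonstandard_ideal n \<pi>" "y \<in> nonstandard_ideal n \<pi>"
  then show "x + y \<in> nonstandard_ideal n \<pi>"
    using keys_add[of x y] unfolding nonstandard_ideal_def poly_ring_def by blast
next
  fix r x assume r: "r \<in> poly_ring (2*n)" and x: "x \<in> nonstandard_ideal n \<pi>"
  have "keys a \<subseteq> {1..2*n} \<and> nonstandard n \<pi> a" if "a \<in> keys (r * x)" for a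
  proof -
    obtain b c where "a = b + c" "b \<in> keys r" "c \<in> keys x"
      using keys_mult[of r x] \<open>a \<in> keys (r * x)\<close> by blast
    then show ?thesis
      using r x keys_add[of b c] nonstandard_add[of n \<pi> c b]
      unfolding nonstandard_ideal_def poly_ring_def by blast
  qed
  then show "r * x \<in> nonstandard_ideal n \<pi>"
    unfolding nonstandard_ideal_def poly_ring_def by blast
qed

lemma ideal_sum_mem:
  assumes "is_ideal m J" "\<And>a. a \<in> A \<Longrightarrow> f a \<in> J"
  shows "sum f A \<in> J"
  using assms(2)
proof (induction A rule: infinite_finite_induct)
  case (insert a A)
  then show ?case using assms(1) unfolding is_ideal_def by simp
qed (use assms(1) in \<open>auto simp: is_ideal_def\<close>)

lemma sum_single_lookup_keys: "(\<Sum>a\<in>keys p. single a (lookup p a)) = p"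
proof (rule poly_mapping_eqI)
  fix k
  have "(\<Sum>a\<in>keys p. lookup p a when a = k) = lookup p k"
    by (cases "k \<in> keys p") (simp_all add: when_def in_keys_iff)
  then show "lookup (\<Sum>a\<in>keys p. single a (lookup p a)) k = lookup p k"
    by (simp add: lookup_sum lookup_single)
qed

theorem init_ideal_toric_ideal:
  assumes mo: "monomial_order ord" and n: "1 \<le> n" and \<pi>: "\<pi> permutes {1..n}"
    and ind: "induces ord n w \<pi>"
  shows "init_ideal ord (2*n) w (toric_ideal n) = nonstandard_ideal n \<pi>"
proof -
  let ?gens = "{init_form ord w f | f. f \<in> toric_ideal n \<and> f \<noteq> 0}"
  have "?gens \<subseteq> nonstandard_ideal n \<pi>"
  proof
    fix x assume "x \<in> ?gens"
    then obtain f where f: "x = init_form ord w f" "f \<in> toric_ideal n" "f \<noteq> 0" by blast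
    have "keys (init_mon ord w f) \<subseteq> {1..2*n}"
      using init_mon_greatest(1)[OF mo f(3)] f(2) unfolding toric_ideal_def poly_ring_def by blast
    moreover have "keys x \<subseteq> {init_mon ord w f}"
      unfolding f(1) init_form_def by simp
    ultimately show "x \<in> nonstandard_ideal n \<pi>"
      using init_mon_nonstandard[OF mo n permutes_inj_on[OF \<pi>] ind f(2,3)]
      unfolding nonstandard_ideal_def poly_ring_def by blast
  qed
  then have "init_ideal ord (2*n) w (toric_ideal n) \<subseteq> nonstandard_ideal n \<pi>"
    unfolding init_ideal_def ideal_gen_def using is_ideal_nonstandard_ideal by blast
  moreover have "p \<in> J" if p: "p \<in> nonstandard_ideal n \<pi>" and J: "is_ideal (2*n) J" "?gens \<subseteq> J" for p J
  proof -
    have "single a (lookup p a) \<in> J" if a: "a \<in> keys p" for a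
    proof -
      have "keys a \<subseteq> {1..2*n}" "nonstandard n \<pi> a"
        using p a unfolding nonstandard_ideal_def poly_ring_def by blast+
      moreover have "lookup p a \<noteq> 0" using a by (simp add: in_keys_iff)
      ultimately obtain f where "f \<in> toric_ideal n" "f \<noteq> 0" "init_form ord w f = single a (lookup p a)"
        using nonstandard_init_form[OF mo n ind] by blast
      then have "single a (lookup p a) \<in> ?gens" by (metis (mono_tags, lifting) mem_Collect_eq)
      then show ?thesis by (rule subsetD[OF J(2)])
    qed
    then have "(\<Sum>a\<in>keys p. single a (lookup p a)) \<in> J"
      by (rule ideal_sum_mem[OF J(1)])
    then show ?thesis by (simp only: sum_single_lookup_keys)
  qed
  then have "nonstandard_ideal n \<pi> \<subseteq> init_ideal ord (2*n) w (toric_ideal n)"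
    unfolding init_ideal_def ideal_gen_def by blast
  ultimately show ?thesis by (rule antisym)
qed

lemma nonstandard_ideal_inj:
  assumes p: "\<pi> permutes {1..n}" and s: "\<sigma> permutes {1..n}"
    and eq: "nonstandard_ideal n \<pi> = nonstandard_ideal n \<sigma>"
  shows "\<pi> = \<sigma>"
proof (rule permutes_eq_if_order_preserving[OF p s])
  fix i j assume ij: "i \<in> {1..n}" "j \<in> {1..n}" "\<pi> j < \<pi> i"
  have "single (pair_mon n i j) 1 \<in> nonstandard_ideal n \<pi>"
    using ij keys_pair_mon[OF ij(1,2)] nonstandard_pair_mon[OF ij(1,2)]
    unfolding nonstandard_ideal_def poly_ring_def by simp
  then show "\<sigma> j < \<sigma> i"
    using eq nonstandard_pair_mon[OF ij(1,2)] unfolding nonstandard_ideal_def by simp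
qed

lemma lookup_perm_weight:
  "lookup (perm_weight n \<pi>) k =
     (if k \<in> {1..n} then real (\<pi> k) else if k \<in> {n+1..2*n} then real (n + 1 - \<pi> (k - n)) else 0)"
  unfolding perm_weight_def by (rule lookup_sum_single_pair)

lemma perm_weight_in_Rvec: "perm_weight n \<pi> \<in> Rvec (2*n)"
  unfolding Rvec_iff lookup_perm_weight by auto

lemma weight_gap_perm_weight:
  assumes p: "\<pi> permutes {1..n}" and i: "i \<in> {1..n}"
  shows "weight_gap n (perm_weight n \<pi>) i = 2 * real (\<pi> i) - real n - 1"
proof -
  have "\<pi> i \<in> {1..n}" using permutes_in_image[OF p] i by blast
  then have "real (n + 1 - \<pi> i) = real n + 1 - real (\<pi> i)" by (simp add: of_nat_diff)
  moreover have "n + i \<notin> {1..n}" "n + i \<in> {n+1..2*n}" using i by auto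
  ultimately show ?thesis unfolding weight_gap_def lookup_perm_weight using i by simp
qed

lemma perm_weight_induces:
  assumes "monomial_order ord" "\<pi> permutes {1..n}"
  shows "induces ord n (perm_weight n \<pi>) \<pi>"
  using assms by (intro induces_if_gaps_strict) (simp_all add: weight_gap_perm_weight)

lemma init_ideals_eq_perm_weight:
  assumes mo: "monomial_order ord" and n: "1 \<le> n"
  shows "{init_ideal ord (2*n) w (toric_ideal n) | w. w \<in> Rvec (2*n)}
           = {init_ideal ord (2*n) (perm_weight n \<pi>) (toric_ideal n) | \<pi>. \<pi> permutes {1..n}}"
    (is "?all = ?perm")
proof
  show "?perm \<subseteq> ?all" using perm_weight_in_Rvec by blast
  show "?all \<subseteq> ?perm"
  proof
    fix I assume "I \<in> ?all"
    then obtain w where w: "I = init_ideal ord (2*n) w (toric_ideal n)" by blast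
    obtain \<pi> where \<pi>: "\<pi> permutes {1..n}" "induces ord n w \<pi>" using induces_exists[OF mo n] by blast
    have "I = init_ideal ord (2*n) (perm_weight n \<pi>) (toric_ideal n)"
      unfolding w init_ideal_toric_ideal[OF mo n \<pi>] init_ideal_toric_ideal[OF mo n \<pi>(1) perm_weight_induces[OF mo \<pi>(1)]] ..
    then show "I \<in> ?perm" using \<pi>(1) by blast
  qed
qed

lemma card_init_ideals:
  assumes mo: "monomial_order ord" and n: "1 \<le> n"
  shows "card {init_ideal ord (2*n) w (toric_ideal n) | w. w \<in> Rvec (2*n)} = fact n"
proof -
  have "{init_ideal ord (2*n) w (toric_ideal n) | w. w \<in> Rvec (2*n)} = nonstandard_ideal n ` {\<pi>. \<pi> permutes {1..n}}"
    unfolding init_ideals_eq_perm_weight[OF mo n]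
    using init_ideal_toric_ideal[OF mo n _ perm_weight_induces[OF mo]] by auto
  moreover have "inj_on (nonstandard_ideal n) {\<pi>. \<pi> permutes {1..n}}"
    using nonstandard_ideal_inj by (intro inj_onI) blast
  ultimately show ?thesis by (simp add: card_image card_permutations)
qed

section \<open>The rearrangement inequality for permutations\<close>

lemma sum_permutes_mult_eq_inversions:
  fixes \<sigma> :: "nat \<Rightarrow> nat" and d :: "nat \<Rightarrow> real"
  assumes s: "\<sigma> permutes {1..n}"
  shows "(\<Sum>i\<in>{1..n}. real (\<sigma> i) * d i)
       = (\<Sum>i\<in>{1..n}. d i) + (\<Sum>i\<in>{1..n}. \<Sum>j\<in>{1..n}. if \<sigma> j < \<sigma> i then d i else 0)"
proof -
  have "real (\<sigma> i) * d i = d i + (\<Sum>j\<in>{1..n}. if \<sigma> j < \<sigma> i then d i else 0)"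
    if i: "i \<in> {1..n}" for i
  proof -
    have "(\<Sum>j\<in>{1..n}. if \<sigma> j < \<sigma> i then d i else 0) = (\<Sum>j\<in>{j\<in>{1..n}. \<sigma> j < \<sigma> i}. d i)"
      by (rule sum.inter_filter[symmetric]) simp
    also have "\<dots> = real (card {j\<in>{1..n}. \<sigma> j < \<sigma> i}) * d i" by simp
    also have "\<dots> = real (\<sigma> i - 1) * d i" by (simp only: card_less_permutes[OF s i])
    also have "\<dots> = real (\<sigma> i) * d i - d i"
    proof -
      have "\<sigma> i \<in> {1..n}" using permutes_in_image[OF s] i by blast
      then have "1 \<le> \<sigma> i" by simp
      then show ?thesis by (simp add: of_nat_diff algebra_simps)
    qed
    finally show ?thesis by simp
  qed
  then show ?thesis by (simp add: sum.distrib)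
qed

text \<open>Pairing the (i, j) and (j, i) inversion terms, twice the inversion sum is
  \<Sum> over all pairs of d at the \<sigma>-larger index, which only grows when \<sigma> is replaced by the
  order of d.\<close>

lemma rearrangement_strict:
  fixes \<pi> \<sigma> :: "nat \<Rightarrow> nat" and d :: "nat \<Rightarrow> real"
  assumes p: "\<pi> permutes {1..n}" and s: "\<sigma> permutes {1..n}" and ne: "\<sigma> \<noteq> \<pi>"
    and d: "\<And>i j. i \<in> {1..n} \<Longrightarrow> j \<in> {1..n} \<Longrightarrow> \<pi> j < \<pi> i \<Longrightarrow> d j < d i"
  shows "(\<Sum>i\<in>{1..n}. real (\<sigma> i) * d i) < (\<Sum>i\<in>{1..n}. real (\<pi> i) * d i)"
proof -
  define inv where "inv \<tau> = (\<Sum>i\<in>{1..n}. \<Sum>j\<in>{1..n}. if \<tau> j < \<tau> i then d i else 0)"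
    for \<tau> :: "nat \<Rightarrow> nat"
  define h where "h \<tau> i j = (if \<tau> j < \<tau> i then d i else 0) + (if \<tau> i < \<tau> j then d j else 0)"
    for \<tau> :: "nat \<Rightarrow> nat" and i j
  have double: "(\<Sum>i\<in>{1..n}. \<Sum>j\<in>{1..n}. h \<tau> i j) = 2 * inv \<tau>" for \<tau>
    unfolding h_def inv_def sum.distrib by (subst (2) sum.swap) simp
  have le: "h \<sigma> i j \<le> h \<pi> i j" if ij: "i \<in> {1..n}" "j \<in> {1..n}" for i j
  proof (cases "i = j")
    case False
    then have "\<sigma> i \<noteq> \<sigma> j" "\<pi> i \<noteq> \<pi> j"
      using permutes_inj[OF s] permutes_inj[OF p] by (simp_all add: inj_eq)
    then show ?thesis unfolding h_def using d ij by (auto simp: less_le)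
  qed (simp add: h_def)
  obtain i0 j0 where ij0: "i0 \<in> {1..n}" "j0 \<in> {1..n}" "\<pi> j0 < \<pi> i0" "\<not> \<sigma> j0 < \<sigma> i0"
    using permutes_eq_if_order_preserving[OF p s] ne by blast
  then have "i0 \<noteq> j0" by auto
  then have "\<sigma> i0 \<noteq> \<sigma> j0" using permutes_inj[OF s] by (simp add: inj_eq)
  then have "\<sigma> i0 < \<sigma> j0" using ij0(4) by simp
  then have lt: "h \<sigma> i0 j0 < h \<pi> i0 j0" unfolding h_def using ij0 d by auto
  have "(\<Sum>i\<in>{1..n}. \<Sum>j\<in>{1..n}. h \<sigma> i j) < (\<Sum>i\<in>{1..n}. \<Sum>j\<in>{1..n}. h \<pi> i j)"
  proof (rule sum_strict_mono_ex1)
    show "\<forall>i\<in>{1..n}. (\<Sum>j\<in>{1..n}. h \<sigma> i j) \<le> (\<Sum>j\<in>{1..n}. h \<pi> i j)"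
      using le by (intro ballI sum_mono) auto
    have "(\<Sum>j\<in>{1..n}. h \<sigma> i0 j) < (\<Sum>j\<in>{1..n}. h \<pi> i0 j)"
      by (rule sum_strict_mono_ex1) (use le ij0 lt in auto)
    then show "\<exists>i\<in>{1..n}. (\<Sum>j\<in>{1..n}. h \<sigma> i j) < (\<Sum>j\<in>{1..n}. h \<pi> i j)"
      using ij0 by blast
  qed simp
  then have "inv \<sigma> < inv \<pi>" unfolding double by simp
  then show ?thesis
    unfolding sum_permutes_mult_eq_inversions[OF s] sum_permutes_mult_eq_inversions[OF p] inv_def
    by simp
qed

lemma sum_transpose_mult:
  fixes \<pi> :: "nat \<Rightarrow> nat" and d :: "nat \<Rightarrow> real"
  assumes "i \<in> A" "j \<in> A" "i \<noteq> j" "finite A"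
  shows "(\<Sum>k\<in>A. real (\<pi> (Transposition.transpose i j k)) * d k)
       = (\<Sum>k\<in>A. real (\<pi> k) * d k) + (real (\<pi> i) - real (\<pi> j)) * (d j - d i)"
proof -
  have "(\<Sum>k\<in>A. real (\<pi> (Transposition.transpose i j k)) * d k)
     = (\<Sum>k\<in>A. real (\<pi> k) * d k + ((if k = i then (real (\<pi> j) - real (\<pi> i)) * d i else 0)
          + (if k = j then (real (\<pi> i) - real (\<pi> j)) * d j else 0)))"
    by (rule sum.cong[OF refl]) (use assms in \<open>auto simp: algebra_simps\<close>)
  also have "\<dots> = (\<Sum>k\<in>A. real (\<pi> k) * d k) + ((real (\<pi> j) - real (\<pi> i)) * d i
          + (real (\<pi> i) - real (\<pi> j)) * d j)"
    using assms by (simp add: sum.distrib)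
  finally show ?thesis by (simp add: algebra_simps)
qed

lemma dotp_sum: "finite S \<Longrightarrow> dotp m a (\<Sum>s\<in>S. u s *\<^sub>R s) = (\<Sum>s\<in>S. u s * dotp m a s)"
  unfolding dotp_def by (simp add: lookup_sum sum_distrib_left algebra_simps sum.swap[of _ "{1..m}"])

lemma dotp_convex_hull_le:
  assumes fin: "finite S" and le: "\<And>s. s \<in> S \<Longrightarrow> dotp m a s \<le> M" and x: "x \<in> convex hull S"
  shows "dotp m a x \<le> M"
proof -
  obtain u where u: "\<forall>s\<in>S. 0 \<le> u s" "sum u S = 1" "(\<Sum>s\<in>S. u s *\<^sub>R s) = x"
    using x unfolding convex_hull_finite[OF fin] by blast
  have "dotp m a x = (\<Sum>s\<in>S. u s * dotp m a s)" using dotp_sum[OF fin] u(3) by metis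
  also have "\<dots> \<le> (\<Sum>s\<in>S. u s * M)" by (rule sum_mono) (use u le in \<open>simp add: mult_left_mono\<close>)
  also have "\<dots> = M" using u(2) by (simp add: sum_distrib_right[symmetric])
  finally show ?thesis .
qed

lemma maximizers_convex_hull_eq_singleton:
  assumes fin: "finite S" and v: "v \<in> S" and less: "\<And>s. s \<in> S \<Longrightarrow> s \<noteq> v \<Longrightarrow> dotp m a s < dotp m a v"
  shows "maximizers m (convex hull S) a = {v}"
proof -
  have le: "dotp m a s \<le> dotp m a v" if "s \<in> S" for s
    using less[OF that] by (cases "s = v") auto
  have "x = v" if x: "x \<in> convex hull S" "dotp m a v \<le> dotp m a x" for x
  proof -
    obtain u where u: "\<forall>s\<in>S. 0 \<le> u s" "sum u S = 1" "(\<Sum>s\<in>S. u s *\<^sub>R s) = x"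
      using x(1) unfolding convex_hull_finite[OF fin] by blast
    let ?excess = "\<lambda>s. u s * (dotp m a v - dotp m a s)"
    have nonneg: "\<And>s. s \<in> S \<Longrightarrow> 0 \<le> ?excess s" using u(1) le by simp
    have "sum ?excess S = dotp m a v - dotp m a x"
      using u(2,3) dotp_sum[OF fin, of m a u]
      by (simp add: algebra_simps sum_subtractf sum_distrib_right[symmetric])
    moreover have "0 \<le> sum ?excess S" using nonneg by (rule sum_nonneg)
    ultimately have "sum ?excess S = 0" using x(2) by linarith
    then have "\<forall>s\<in>S. ?excess s = 0" using sum_nonneg_eq_0_iff[OF fin, of ?excess] nonneg by blast
    then have zero: "u s = 0" if "s \<in> S - {v}" for s
      using less[of s] that by force
    then have "u v = 1" using u(2) fin v by (simp add: sum.remove)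
    moreover have "(\<Sum>s\<in>S - {v}. u s *\<^sub>R s) = 0" using zero by simp
    ultimately show "x = v" using u(3) fin v by (simp add: sum.remove)
  qed
  moreover have "v \<in> maximizers m (convex hull S) a"
    unfolding maximizers_def using hull_inc[OF v] dotp_convex_hull_le[OF fin le] by blast
  ultimately show ?thesis unfolding maximizers_def by blast
qed

lemma maximizers_convex_hull_singletonD:
  assumes fin: "finite S" and ne: "S \<noteq> {}" and max: "maximizers m (convex hull S) a = {v}"
  shows "v \<in> S" and "\<And>s. s \<in> S \<Longrightarrow> s \<noteq> v \<Longrightarrow> dotp m a s < dotp m a v"
proof -
  define M where "M = Max (dotp m a ` S)"
  have "M \<in> dotp m a ` S" unfolding M_def using fin ne by simp
  then obtain s0 where s0: "s0 \<in> S" "dotp m a s0 = M" by blast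
  have le_M: "\<And>s. s \<in> S \<Longrightarrow> dotp m a s \<le> M" unfolding M_def using fin by simp
  have "s \<in> maximizers m (convex hull S) a" if "s \<in> S" "dotp m a s = M" for s
    unfolding maximizers_def using hull_inc[OF that(1)] dotp_convex_hull_le[OF fin le_M] that(2)
    by simp
  then have eq_v: "\<And>s. s \<in> S \<Longrightarrow> dotp m a s = M \<Longrightarrow> s = v" using max by blast
  then show "v \<in> S" using s0 by metis
  show "dotp m a s < dotp m a v" if "s \<in> S" "s \<noteq> v" for s
    using le_M[OF that(1)] eq_v[OF that(1)] eq_v[OF s0] s0 that(2) by fastforce
qed

section \<open>The state polytope\<close>

definition state_vertex :: "nat \<Rightarrow> (nat \<Rightarrow> nat) \<Rightarrow> (nat \<Rightarrow>\<^sub>0 real)" where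
  "state_vertex n \<pi> = (\<Sum>i\<in>{1..n}. single i (real (\<pi> i)) + single (n + i) (- real (\<pi> i)))"

definition state_vertices :: "nat \<Rightarrow> (nat \<Rightarrow>\<^sub>0 real) set" where
  "state_vertices n = state_vertex n ` {\<pi>. \<pi> permutes {1..n}}"

lemma lookup_state_vertex:
  "lookup (state_vertex n \<pi>) k =
     (if k \<in> {1..n} then real (\<pi> k) else if k \<in> {n+1..2*n} then - real (\<pi> (k - n)) else 0)"
  unfolding state_vertex_def by (rule lookup_sum_single_pair)

lemma dotp_state_vertex:
  "dotp (2*n) a (state_vertex n \<sigma>) = (\<Sum>i\<in>{1..n}. real (\<sigma> i) * weight_gap n a i)"
proof -
  have "dotp (2*n) a (state_vertex n \<sigma>)
      = (\<Sum>k\<in>{1..n}. lookup a k * lookup (state_vertex n \<sigma>) k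
                     + lookup a (n + k) * lookup (state_vertex n \<sigma>) (n + k))"
    unfolding dotp_def by (rule sum_atLeastAtMost_double)
  also have "\<dots> = (\<Sum>i\<in>{1..n}. real (\<sigma> i) * weight_gap n a i)"
    by (intro sum.cong) (auto simp: lookup_state_vertex weight_gap_def algebra_simps)
  finally show ?thesis .
qed

lemma state_vertex_inj:
  fixes \<pi> \<sigma> :: "nat \<Rightarrow> nat"
  assumes "\<pi> permutes {1..n}" "\<sigma> permutes {1..n}" "state_vertex n \<sigma> = state_vertex n \<pi>"
  shows "\<sigma> = \<pi>"
proof
  fix k
  show "\<sigma> k = \<pi> k"
  proof (cases "k \<in> {1..n}")
    case True
    then show ?thesis
      using arg_cong[OF assms(3), of "\<lambda>x. lookup x k"] by (simp add: lookup_state_vertex)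
  qed (metis assms(1,2) permutes_not_in)
qed

lemma finite_state_vertices: "finite (state_vertices n)"
  unfolding state_vertices_def by (simp add: finite_permutations)

lemma state_vertices_nonempty: "state_vertices n \<noteq> {}"
  unfolding state_vertices_def using permutes_id by blast

lemma state_vertex_in_Rvec: "state_vertex n \<pi> \<in> Rvec (2*n)"
  unfolding Rvec_iff lookup_state_vertex by auto

lemma state_vertices_subset_Rvec: "state_vertices n \<subseteq> Rvec (2*n)"
  unfolding state_vertices_def using state_vertex_in_Rvec by blast

definition strict_gap_cone :: "nat \<Rightarrow> (nat \<Rightarrow> nat) \<Rightarrow> (nat \<Rightarrow>\<^sub>0 real) set" where
  "strict_gap_cone n \<pi> = {a \<in> Rvec (2*n).
     \<forall>i\<in>{1..n}. \<forall>j\<in>{1..n}. \<pi> j < \<pi> i \<longrightarrow> weight_gap n a j < weight_gap n a i}"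

definition gap_cone :: "nat \<Rightarrow> (nat \<Rightarrow> nat) \<Rightarrow> (nat \<Rightarrow>\<^sub>0 real) set" where
  "gap_cone n \<pi> = {a \<in> Rvec (2*n).
     \<forall>i\<in>{1..n}. \<forall>j\<in>{1..n}. \<pi> j < \<pi> i \<longrightarrow> weight_gap n a j \<le> weight_gap n a i}"

text \<open>Whenever a gap inequality fails, transposing i and j gives a vertex that is at least
  as good, so a vertex is the unique maximizer exactly on the strict gap cone.\<close>

lemma normal_cone_state_vertex:
  assumes p: "\<pi> permutes {1..n}"
  shows "normal_cone (2*n) (convex hull state_vertices n) {state_vertex n \<pi>} = strict_gap_cone n \<pi>"
proof -
  have "maximizers (2*n) (convex hull state_vertices n) a = {state_vertex n \<pi>}
        \<longleftrightarrow> (\<forall>i\<in>{1..n}. \<forall>j\<in>{1..n}. \<pi> j < \<pi> i \<longrightarrow> weight_gap n a j < weight_gap n a i)" for a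
  proof
    assume strict: "\<forall>i\<in>{1..n}. \<forall>j\<in>{1..n}. \<pi> j < \<pi> i \<longrightarrow> weight_gap n a j < weight_gap n a i"
    show "maximizers (2*n) (convex hull state_vertices n) a = {state_vertex n \<pi>}"
    proof (rule maximizers_convex_hull_eq_singleton[OF finite_state_vertices])
      show "state_vertex n \<pi> \<in> state_vertices n" unfolding state_vertices_def using p by blast
      fix s assume "s \<in> state_vertices n" "s \<noteq> state_vertex n \<pi>"
      then obtain \<sigma> where \<sigma>: "\<sigma> permutes {1..n}" "s = state_vertex n \<sigma>" "\<sigma> \<noteq> \<pi>"
        unfolding state_vertices_def by blast
      show "dotp (2*n) a s < dotp (2*n) a (state_vertex n \<pi>)"
        unfolding \<sigma>(2) dotp_state_vertex by (rule rearrangement_strict[OF p \<sigma>(1,3)]) (use strict in blast)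
    qed
  next
    assume max: "maximizers (2*n) (convex hull state_vertices n) a = {state_vertex n \<pi>}"
    show "\<forall>i\<in>{1..n}. \<forall>j\<in>{1..n}. \<pi> j < \<pi> i \<longrightarrow> weight_gap n a j < weight_gap n a i"
    proof (intro ballI impI, rule ccontr)
      fix i j assume ij: "i \<in> {1..n}" "j \<in> {1..n}" "\<pi> j < \<pi> i"
        and not_less: "\<not> weight_gap n a j < weight_gap n a i"
      let ?\<sigma> = "\<pi> \<circ> Transposition.transpose i j"
      have "i \<noteq> j" using ij by auto
      have \<sigma>: "?\<sigma> permutes {1..n}" by (rule permutes_compose[OF permutes_swap_id[OF ij(1,2)] p])
      have "?\<sigma> i \<noteq> \<pi> i" using ij by simp
      then have "?\<sigma> \<noteq> \<pi>" by metis
      then have "state_vertex n ?\<sigma> \<noteq> state_vertex n \<pi>" using state_vertex_inj[OF p \<sigma>] by blast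
      moreover have "state_vertex n ?\<sigma> \<in> state_vertices n" unfolding state_vertices_def using \<sigma> by blast
      ultimately have "dotp (2*n) a (state_vertex n ?\<sigma>) < dotp (2*n) a (state_vertex n \<pi>)"
        by (intro maximizers_convex_hull_singletonD(2)[OF finite_state_vertices state_vertices_nonempty max])
      moreover have "dotp (2*n) a (state_vertex n ?\<sigma>)
          = dotp (2*n) a (state_vertex n \<pi>) + (real (\<pi> i) - real (\<pi> j)) * (weight_gap n a j - weight_gap n a i)"
        unfolding dotp_state_vertex o_apply by (rule sum_transpose_mult[OF ij(1,2) \<open>i \<noteq> j\<close>]) simp
      moreover have "0 \<le> (real (\<pi> i) - real (\<pi> j)) * (weight_gap n a j - weight_gap n a i)"
        using ij(3) not_less by simp
      ultimately show False by simp
    qed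
  qed
  then show ?thesis unfolding normal_cone_def strict_gap_cone_def by blast
qed

lemma maximizers_state_polytope_singletonD:
  assumes "maximizers (2*n) (convex hull state_vertices n) a = {v}"
  shows "\<exists>\<pi>. \<pi> permutes {1..n} \<and> v = state_vertex n \<pi>"
  using maximizers_convex_hull_singletonD(1)[OF finite_state_vertices state_vertices_nonempty assms]
  unfolding state_vertices_def by blast

lemma bounded_linear_lookup: "bounded_linear (\<lambda>x :: 'a \<Rightarrow>\<^sub>0 real. lookup x k)"
proof (rule bounded_linear_intro[where K = 1])
  show "norm (lookup x k) \<le> norm x * 1" for x :: "'a \<Rightarrow>\<^sub>0 real"
  proof (cases "k \<in> keys x")
    case True
    then show ?thesis
      unfolding norm_poly_mapping_def dist_poly_mapping_def
      by (simp add: dist_real_def) (rule member_le_sum, auto)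
  qed (simp add: in_keys_iff)
qed (simp_all add: lookup_add)

lemma continuous_on_weight_gap: "continuous_on UNIV (\<lambda>x. weight_gap n x i)"
  unfolding weight_gap_def
  by (intro continuous_on_diff linear_continuous_on[OF bounded_linear_lookup])

lemma closed_gap_cone: "closed (gap_cone n \<pi>)"
proof -
  have "gap_cone n \<pi> = (\<Inter>k\<in>-{1..2*n}. {a. lookup a k = 0}) \<inter>
      (\<Inter>(i, j)\<in>{(i, j). i \<in> {1..n} \<and> j \<in> {1..n} \<and> \<pi> j < \<pi> i}. {a. weight_gap n a j \<le> weight_gap n a i})"
    unfolding gap_cone_def Rvec_iff by auto
  moreover have "closed {a :: nat \<Rightarrow>\<^sub>0 real. lookup a k = 0}" for k
    by (intro closed_Collect_eq linear_continuous_on[OF bounded_linear_lookup] continuous_on_const)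
  moreover have "closed {a. weight_gap n a j \<le> weight_gap n a i}" for i j
    by (intro closed_Collect_le continuous_on_weight_gap)
  ultimately show ?thesis by (auto intro!: closed_Int closed_INT)
qed

text \<open>Adding a small multiple of (\<pi>, 0) makes every gap inequality strict.\<close>

lemma closure_strict_gap_cone: "closure (strict_gap_cone n \<pi>) = gap_cone n \<pi>"
proof
  show "closure (strict_gap_cone n \<pi>) \<subseteq> gap_cone n \<pi>"
    by (rule closure_minimal[OF _ closed_gap_cone])
      (auto simp: strict_gap_cone_def gap_cone_def less_imp_le)
  show "gap_cone n \<pi> \<subseteq> closure (strict_gap_cone n \<pi>)"
  proof
    fix a assume a: "a \<in> gap_cone n \<pi>"
    define b :: "nat \<Rightarrow>\<^sub>0 real" where "b = (\<Sum>i\<in>{1..n}. single i (real (\<pi> i)))"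
    have lookup_b: "lookup b k = (if k \<in> {1..n} then real (\<pi> k) else 0)" for k
      unfolding b_def by (rule lookup_sum_single) simp
    have "a + \<epsilon> *\<^sub>R b \<in> strict_gap_cone n \<pi>" if "0 < \<epsilon>" for \<epsilon>
    proof -
      have "weight_gap n (a + \<epsilon> *\<^sub>R b) i = weight_gap n a i + \<epsilon> * real (\<pi> i)" if "i \<in> {1..n}" for i
        using that by (simp add: weight_gap_def lookup_add lookup_b)
      then show ?thesis
        using a \<open>0 < \<epsilon>\<close> unfolding strict_gap_cone_def gap_cone_def Rvec_iff
        by (auto simp: lookup_add lookup_b add_le_less_mono)
    qed
    moreover have "(\<lambda>k. a + inverse (real (Suc k)) *\<^sub>R b) \<longlonglongrightarrow> a + 0 *\<^sub>R b"
      by (intro tendsto_intros LIMSEQ_inverse_real_of_nat)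
    ultimately show "a \<in> closure (strict_gap_cone n \<pi>)"
      unfolding closure_sequential by (intro exI[of _ "\<lambda>k. a + inverse (real (Suc k)) *\<^sub>R b"]) simp
  qed
qed

lemma groebner_class_eq:
  assumes mo: "monomial_order ord" and n: "1 \<le> n" and p: "\<pi> permutes {1..n}"
    and ind: "induces ord n w \<pi>"
  shows "{w' \<in> Rvec (2*n). init_ideal ord (2*n) w' (toric_ideal n) = init_ideal ord (2*n) w (toric_ideal n)}
       = {w' \<in> Rvec (2*n). induces ord n w' \<pi>}"
proof -
  have "init_ideal ord (2*n) w' (toric_ideal n) = nonstandard_ideal n \<pi> \<longleftrightarrow> induces ord n w' \<pi>" for w'
  proof -
    obtain \<sigma> where \<sigma>: "\<sigma> permutes {1..n}" "induces ord n w' \<sigma>" using induces_exists[OF mo n] by blast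
    have "init_ideal ord (2*n) w' (toric_ideal n) = nonstandard_ideal n \<sigma>"
      by (rule init_ideal_toric_ideal[OF mo n \<sigma>])
    moreover have "nonstandard_ideal n \<sigma> = nonstandard_ideal n \<pi> \<longleftrightarrow> \<sigma> = \<pi>"
      using nonstandard_ideal_inj[OF \<sigma>(1) p] by blast
    moreover have "induces ord n w' \<pi> \<longleftrightarrow> \<sigma> = \<pi>"
      using induces_unique[OF \<sigma>(1) p \<sigma>(2)] \<sigma>(2) by blast
    ultimately show ?thesis by simp
  qed
  then show ?thesis unfolding init_ideal_toric_ideal[OF mo n p ind] by blast
qed

lemma closure_groebner_class:
  assumes mo: "monomial_order ord" and p: "\<pi> permutes {1..n}"
  shows "closure {w \<in> Rvec (2*n). induces ord n w \<pi>} = gap_cone n \<pi>"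
proof (rule antisym)
  have "w \<in> gap_cone n \<pi>" if "w \<in> Rvec (2*n)" "induces ord n w \<pi>" for w
    unfolding gap_cone_def using that gap_le_if_induces[OF that(2)] by blast
  then show "closure {w \<in> Rvec (2*n). induces ord n w \<pi>} \<subseteq> gap_cone n \<pi>"
    by (intro closure_minimal[OF _ closed_gap_cone]) blast
  have "induces ord n w \<pi>" if "w \<in> strict_gap_cone n \<pi>" for w
    using that unfolding strict_gap_cone_def by (intro induces_if_gaps_strict[OF mo p]) blast
  then have "strict_gap_cone n \<pi> \<subseteq> {w \<in> Rvec (2*n). induces ord n w \<pi>}"
    unfolding strict_gap_cone_def by blast
  show "gap_cone n \<pi> \<subseteq> closure {w \<in> Rvec (2*n). induces ord n w \<pi>}"
    using closure_mono[OF \<open>strict_gap_cone n \<pi> \<subseteq> _\<close>] unfolding closure_strict_gap_cone .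
qed

lemma groebner_cones_toric_ideal:
  assumes mo: "monomial_order ord" and n: "1 \<le> n"
  shows "groebner_cones ord (2*n) (toric_ideal n) = {gap_cone n \<pi> | \<pi>. \<pi> permutes {1..n}}"
proof -
  let ?class = "\<lambda>w. {w' \<in> Rvec (2*n). init_ideal ord (2*n) w' (toric_ideal n) = init_ideal ord (2*n) w (toric_ideal n)}"
  have "\<exists>\<pi>. \<pi> permutes {1..n} \<and> closure (?class w) = gap_cone n \<pi>" for w
  proof -
    obtain \<pi> where \<pi>: "\<pi> permutes {1..n}" "induces ord n w \<pi>" using induces_exists[OF mo n] by blast
    then show ?thesis
      using groebner_class_eq[OF mo n \<pi>] closure_groebner_class[OF mo \<pi>(1)] by auto
  qed
  moreover have "closure (?class (perm_weight n \<pi>)) = gap_cone n \<pi>" if "\<pi> permutes {1..n}" for \<pi>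
    using groebner_class_eq[OF mo n that perm_weight_induces[OF mo that]]
      closure_groebner_class[OF mo that] by simp
  ultimately show ?thesis
    unfolding groebner_cones_def using perm_weight_in_Rvec by blast
qed

lemma normal_fan_state_polytope:
  "normal_fan_max_cones (2*n) (convex hull state_vertices n) = {gap_cone n \<pi> | \<pi>. \<pi> permutes {1..n}}"
proof -
  let ?N = "\<lambda>v. normal_cone (2*n) (convex hull state_vertices n) {v}"
  have vertex: "\<exists>\<pi>. \<pi> permutes {1..n} \<and> v = state_vertex n \<pi>" if "?N v \<noteq> {}" for v
    using that maximizers_state_polytope_singletonD unfolding normal_cone_def by blast
  have nonempty: "?N (state_vertex n \<pi>) \<noteq> {}" if "\<pi> permutes {1..n}" for \<pi>
  proof -
    have "perm_weight n \<pi> \<in> strict_gap_cone n \<pi>"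
      using that unfolding strict_gap_cone_def by (simp add: perm_weight_in_Rvec weight_gap_perm_weight)
    then show ?thesis unfolding normal_cone_state_vertex[OF that] by blast
  qed
  have closure: "closure (?N (state_vertex n \<pi>)) = gap_cone n \<pi>" if "\<pi> permutes {1..n}" for \<pi>
    unfolding normal_cone_state_vertex[OF that] closure_strict_gap_cone ..
  show ?thesis
    unfolding normal_fan_max_cones_def
  proof (intro equalityI subsetI)
    fix C assume "C \<in> {closure (?N v) | v. ?N v \<noteq> {}}"
    then obtain v where "C = closure (?N v)" "?N v \<noteq> {}" by blast
    then obtain \<pi> where "\<pi> permutes {1..n}" "C = closure (?N (state_vertex n \<pi>))"
      using vertex by blast
    then show "C \<in> {gap_cone n \<pi> | \<pi>. \<pi> permutes {1..n}}" using closure by blast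
  next
    fix C assume "C \<in> {gap_cone n \<pi> | \<pi>. \<pi> permutes {1..n}}"
    then obtain \<pi> where "\<pi> permutes {1..n}" "C = gap_cone n \<pi>" by blast
    then show "C \<in> {closure (?N v) | v. ?N v \<noteq> {}}"
      using closure nonempty by blast
  qed
qed

theorem state_polytope_toric_ideal:
  assumes "monomial_order ord" "1 \<le> n"
  shows "state_polytope ord (2*n) (toric_ideal n) (convex hull state_vertices n)"
  unfolding state_polytope_def polytope_in_def groebner_cones_toric_ideal[OF assms] normal_fan_state_polytope
  using finite_state_vertices state_vertices_subset_Rvec by blast

section \<open>Unimodular equivalence with the permutohedron\<close>

text \<open>shear n c is the integer matrix of (x, y) \<mapsto> (x, c x + y) on Z^n \<times> Z^n.\<close>

definition shear :: "nat \<Rightarrow> int \<Rightarrow> nat \<Rightarrow> nat \<Rightarrow> int" where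
  "shear n c i j = (if i = j then 1 else 0) + (if n < i \<and> j = i - n then c else 0)"

lemma sum_shear_mult:
  fixes F :: "nat \<Rightarrow> 'a :: comm_ring_1"
  assumes i: "i \<in> {1..2*n}"
  shows "(\<Sum>k\<in>{1..2*n}. of_int (shear n c i k) * F k) = F i + (if n < i then of_int c * F (i - n) else 0)"
proof -
  have "(\<Sum>k\<in>{1..2*n}. of_int (shear n c i k) * F k)
      = (\<Sum>k\<in>{1..2*n}. (if k = i then F k else 0) + (if n < i \<and> k = i - n then of_int c * F k else 0))"
    by (intro sum.cong) (auto simp: shear_def algebra_simps)
  also have "\<dots> = F i + (if n < i then of_int c * F (i - n) else 0)"
  proof -
    have "n < i \<Longrightarrow> i - n \<in> {1..2*n}" using i by auto
    then show ?thesis using i by (cases "n < i") (simp_all add: sum.distrib sum.delta)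
  qed
  finally show ?thesis .
qed

lemma shear_mult:
  assumes "i \<in> {1..2*n}" "j \<in> {1..2*n}"
  shows "(\<Sum>k\<in>{1..2*n}. shear n c i k * shear n d k j) = shear n (c + d) i j"
  using sum_shear_mult[OF assms(1), of c "\<lambda>k. shear n d k j"] assms
  by (auto simp: shear_def algebra_simps)

lemma shear_zero: "shear n 0 i j = (if i = j then 1 else 0)"
  by (simp add: shear_def)

definition shear_map :: "nat \<Rightarrow> (nat \<Rightarrow>\<^sub>0 real) \<Rightarrow> (nat \<Rightarrow>\<^sub>0 real)" where
  "shear_map n x = (\<Sum>i\<in>{1..2*n}. single i (\<Sum>j\<in>{1..2*n}. of_int (shear n 1 i j) * lookup x j))"

lemma lookup_shear_map:
  "lookup (shear_map n x) k = (if k \<in> {1..2*n} then lookup x k + (if n < k then lookup x (k - n) else 0) else 0)"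
  unfolding shear_map_def lookup_sum_single[OF finite_atLeastAtMost] by (simp add: sum_shear_mult)

lemma linear_shear_map: "linear (shear_map n)"
  by (intro linearI; rule poly_mapping_eqI) (simp_all add: lookup_shear_map lookup_add algebra_simps)

lemma shear_map_state_vertex: "shear_map n (state_vertex n \<pi>) = perm_vec n \<pi>"
proof (rule poly_mapping_eqI)
  fix k
  have "lookup (perm_vec n \<pi>) k = (if k \<in> {1..n} then real (\<pi> k) else 0)"
    unfolding perm_vec_def by (rule lookup_sum_single) simp
  moreover have "k - n \<in> {1..n}" if "k \<in> {n+1..2*n}" using that by auto
  ultimately show "lookup (shear_map n (state_vertex n \<pi>)) k = lookup (perm_vec n \<pi>) k"
    by (auto simp: lookup_shear_map lookup_state_vertex)
qed

theorem unimod_equiv_state_polytope: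
  "unimod_equiv (2*n) (convex hull state_vertices n) (permutohedron n)"
  unfolding unimod_equiv_def
proof (intro exI conjI)
  show "\<forall>i\<in>{1..2*n}. \<forall>j\<in>{1..2*n}.
            (\<Sum>k\<in>{1..2*n}. shear n 1 i k * shear n (-1) k j) = (if i = j then 1 else 0)
          \<and> (\<Sum>k\<in>{1..2*n}. shear n (-1) i k * shear n 1 k j) = (if i = j then 1 else 0)"
    by (simp add: shear_mult shear_zero)
  have "shear_map n ` (convex hull state_vertices n) = convex hull (shear_map n ` state_vertices n)"
    by (rule convex_hull_linear_image[OF linear_shear_map])
  also have "shear_map n ` state_vertices n = {perm_vec n \<pi> | \<pi>. \<pi> permutes {1..n}}"
    unfolding state_vertices_def image_image shear_map_state_vertex by blast
  finally show "permutohedron n = (\<lambda>x. \<Sum>i\<in>{1..2*n}. single i (of_int ((\<lambda>_. 0 :: int) i)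
      + (\<Sum>j\<in>{1..2*n}. of_int (shear n 1 i j) * lookup x j))) ` (convex hull state_vertices n)"
    unfolding permutohedron_def shear_map_def by simp
qed

theorem mainTheorem6:
  fixes n :: nat and ord :: "mon \<Rightarrow> mon \<Rightarrow> bool"
  assumes "1 \<le> n"
    and "monomial_order ord"
  shows "(\<exists>P. state_polytope ord (2*n) (toric_ideal n) P
              \<and> unimod_equiv (2*n) P (permutohedron n))
       \<and> card {init_ideal ord (2*n) w (toric_ideal n) | w. w \<in> Rvec (2*n)} = fact n
       \<and> {init_ideal ord (2*n) w (toric_ideal n) | w. w \<in> Rvec (2*n)}
           = {init_ideal ord (2*n) (perm_weight n \<pi>) (toric_ideal n) | \<pi>. \<pi> permutes {1..n}}"
  using state_polytope_toric_ideal[OF assms(2,1)] unimod_equiv_state_polytope[of n]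
    card_init_ideals[OF assms(2,1)] init_ideals_eq_perm_weight[OF assms(2,1)]
  by blast

end
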